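(* Let $b>0$, $c>0$, $k,\sigma\in\mathbb R$, $T>0$, let $f\in L^2(0,T;L^2(\Omega))$, and let the coefficients $\alpha_h,\boldsymbol\beta_h$ satisfy Assumption (K1). Then the solution $(\psi_h,\boldsymbol v_h)\in H^2(0,T;\Psi_h)\times H^2(0,T;\boldsymbol V_h)$ of the linearized semi-discrete problem (LK) with initial data $\psi_{0h},\psi_{1h}\in\Psi_h$ satisfies $$E[\psi_h,\boldsymbol v_h](t)\le C\Big(E[\psi_h,\boldsymbol v_h](0)+\int_0^t\|f(s)\|_{L^2}^2\,ds\Big),\qquad t\in[0,T],$$ where $C>0$ is independent of $h$ (it may depend on $T,b,c,k,\sigma,\underline\alpha,\overline\alpha,\overline\beta$).
   Context: Setting: $\Omega\subset\mathbb R^d$, $d\in\{2,3\}$, is a bounded convex polygonal/polyhedral domain with a regular quasi-uniform family of meshes of size $h\in(0,1)$, and $\Psi_h\times\boldsymbol V_h\subset L^2(\Omega)\times\boldsymbol H(\mathrm{div};\Omega)$ is a pair of finite-dimensional mixed finite element spaces (RT, BDFM, BDM or BDDF type) with $\nabla\cdot\boldsymbol V_h\subseteq\Psi_h$. $(\cdot,\cdot)$ is the $L^2(\Omega)$ inner product. Linearized problem (LK): given coefficients $\alpha_h:\Omega\times(0,T)\to\mathbb R$ and $\boldsymbol\beta_h:\Omega\times(0,T)\to\mathbb R^d$, find $(\psi_h,\boldsymbol v_h):[0,T]\to\Psi_h\times\boldsymbol V_h$ such that for a.e. $t$ and all $(\phi_h,\boldsymbol w_h)\in\Psi_h\times\boldsymbol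 V_h$: $((1+2k\alpha_h)\psi_{htt},\phi_h)-(c^2\nabla\cdot\boldsymbol v_h+b\nabla\cdot\boldsymbol v_{ht},\phi_h)+2\sigma(\boldsymbol\beta_h\cdot\boldsymbol v_{ht},\phi_h)=(f,\phi_h)$ and $(\boldsymbol v_h,\boldsymbol w_h)+(\psi_h,\nabla\cdot\boldsymbol w_h)=0$, with $\psi_h(0)=\psi_{0h}$, $\psi_{ht}(0)=\psi_{1h}$. The initial velocities $\boldsymbol v_h(0)=\boldsymbol v_{0h}$, $\boldsymbol v_{ht}(0)=\boldsymbol v_{1h}$ are the elements of $\boldsymbol V_h$ with $(\boldsymbol v_{ih},\boldsymbol w_h)+(\psi_{ih},\nabla\cdot\boldsymbol w_h)=0$ for all $\boldsymbol w_h\in\boldsymbol V_h$, $i=0,1$. Assumption (K1): there exist $\underline\alpha,\overline\alpha,\overline\beta>0$ independent of $h$ with $0<1-2|k|\underline\alpha\le 1+2k\alpha_h(x,t)\le1+2|k|\overline\alpha$ on $\Omega\times(0,T)$ and $\|\boldsymbol\beta_h\|_{L^\infty(0,T;L^\infty(\Omega))}\le\overline\beta$. Energy: $E[\psi,\boldsymbol v](t)=\|\psi(t)\|_{L^2}^2+\|\psi_t(t)\|_{L^2}^2+\int_0^t\|\psi_{tt}(s)\|_{L^2}^2ds+\|\boldsymbol v(t)\|_{L^2}^2+\|\boldsymbol v_t(t)\|_{L^2}^2$. *)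

theory Defs
  imports "HOL-Analysis.Analysis"
begin

definition sq_int :: "(real^'d) set \<Rightarrow> (real^'d \<Rightarrow> 'b::real_normed_vector) \<Rightarrow> bool" where
  "sq_int \<Omega> u \<longleftrightarrow> u \<in> borel_measurable (lebesgue_on \<Omega>)
      \<and> integrable (lebesgue_on \<Omega>) (\<lambda>x. (norm (u x))^2)"

definition l2ip :: "(real^'d) set \<Rightarrow> (real^'d \<Rightarrow> 'b::real_inner) \<Rightarrow> (real^'d \<Rightarrow> 'b) \<Rightarrow> real" where
  "l2ip \<Omega> u w = integral\<^sup>L (lebesgue_on \<Omega>) (\<lambda>x. inner (u x) (w x))"

definition test_fun :: "(real^'d) set \<Rightarrow> (real^'d \<Rightarrow> real) \<Rightarrow> (real^'d \<Rightarrow> real^'d) \<Rightarrow> bool" where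
  "test_fun \<Omega> \<phi> G \<longleftrightarrow> (\<forall>x. (\<phi> has_derivative (\<lambda>y. inner (G x) y)) (at x))
      \<and> continuous_on UNIV G
      \<and> compact (closure {x. \<phi> x \<noteq> 0}) \<and> closure {x. \<phi> x \<noteq> 0} \<subseteq> \<Omega>"

definition has_weak_div :: "(real^'d) set \<Rightarrow> (real^'d \<Rightarrow> real^'d) \<Rightarrow> (real^'d \<Rightarrow> real) \<Rightarrow> bool" where
  "has_weak_div \<Omega> v g \<longleftrightarrow> sq_int \<Omega> g \<and>
     (\<forall>\<phi> G. test_fun \<Omega> \<phi> G \<longrightarrow>
        integral\<^sup>L (lebesgue_on \<Omega>) (\<lambda>x. inner (v x) (G x))
          = - integral\<^sup>L (lebesgue_on \<Omega>) (\<lambda>x. g x * \<phi> x))"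

definition Hdiv :: "(real^'d) set \<Rightarrow> (real^'d \<Rightarrow> real^'d) \<Rightarrow> bool" where
  "Hdiv \<Omega> v \<longleftrightarrow> sq_int \<Omega> v \<and> (\<exists>g. has_weak_div \<Omega> v g)"

text \<open>The weak divergence (unique up to null sets; a representative is chosen).\<close>
definition wdiv :: "(real^'d) set \<Rightarrow> (real^'d \<Rightarrow> real^'d) \<Rightarrow> (real^'d \<Rightarrow> real)" where
  "wdiv \<Omega> v = (SOME g. has_weak_div \<Omega> v g)"

text \<open>Finite-dimensional spaces: spans of finite lists of functions.\<close>
definition lin_comb :: "('a \<Rightarrow> 'b::real_vector) list \<Rightarrow> (nat \<Rightarrow> real) \<Rightarrow> 'a \<Rightarrow> 'b" where
  "lin_comb B c = (\<lambda>x. \<Sum>i<length B. c i *\<^sub>R (B ! i) x)"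

definition fspan :: "('a \<Rightarrow> 'b::real_vector) list \<Rightarrow> ('a \<Rightarrow> 'b) set" where
  "fspan B = {lin_comb B c | c. True}"

definition H2_scalar :: "real \<Rightarrow> (real \<Rightarrow> real) \<Rightarrow> (real \<Rightarrow> real) \<Rightarrow> (real \<Rightarrow> real) \<Rightarrow> bool" where
  "H2_scalar T a a1 a2 \<longleftrightarrow>
     a2 \<in> borel_measurable (lebesgue_on {0..T})
     \<and> integrable (lebesgue_on {0..T}) (\<lambda>t. (a2 t)^2)
     \<and> (\<forall>t\<in>{0..T}. a1 t = a1 0 + integral\<^sup>L (lebesgue_on {0..t}) a2)
     \<and> (\<forall>t\<in>{0..T}. a t = a 0 + integral\<^sup>L (lebesgue_on {0..t}) a1)"

definition H2_time :: "('a \<Rightarrow> 'b::real_vector) list \<Rightarrow> real \<Rightarrow> (real \<Rightarrow> 'a \<Rightarrow> 'b)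
    \<Rightarrow> (real \<Rightarrow> 'a \<Rightarrow> 'b) \<Rightarrow> (real \<Rightarrow> 'a \<Rightarrow> 'b) \<Rightarrow> bool" where
  "H2_time B T u u1 u2 \<longleftrightarrow> (\<exists>a a1 a2.
     (\<forall>i<length B. H2_scalar T (a i) (a1 i) (a2 i))
     \<and> (\<forall>t\<in>{0..T}. u t = lin_comb B (\<lambda>i. a i t)
                  \<and> u1 t = lin_comb B (\<lambda>i. a1 i t)
                  \<and> u2 t = lin_comb B (\<lambda>i. a2 i t)))"

definition energy :: "(real^'d) set \<Rightarrow> (real \<Rightarrow> real^'d \<Rightarrow> real) \<Rightarrow> (real \<Rightarrow> real^'d \<Rightarrow> real)
    \<Rightarrow> (real \<Rightarrow> real^'d \<Rightarrow> real) \<Rightarrow> (real \<Rightarrow> real^'d \<Rightarrow> real^'d) \<Rightarrow> (real \<Rightarrow> real^'d \<Rightarrow> real^'d)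
    \<Rightarrow> real \<Rightarrow> real" where
  "energy \<Omega> \<psi> \<psi>t \<psi>tt v vt t =
     l2ip \<Omega> (\<psi> t) (\<psi> t) + l2ip \<Omega> (\<psi>t t) (\<psi>t t)
     + integral\<^sup>L (lebesgue_on {0..t}) (\<lambda>s. l2ip \<Omega> (\<psi>tt s) (\<psi>tt s))
     + l2ip \<Omega> (v t) (v t) + l2ip \<Omega> (vt t) (vt t)"

end

theory Submission
  imports Defs
begin

section \<open>Lebesgue measure on the real line\<close>

lemma sigma_finite_lebesgue: "sigma_finite_measure (lebesgue :: 'a::euclidean_space measure)"
proof -
  obtain A :: "'a set set" where A: "countable A" "A \<subseteq> sets lborel" "\<Union>A = space lborel"
       "\<forall>a\<in>A. emeasure lborel a \<noteq> \<infinity>"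
    using sigma_finite_measure.sigma_finite_countable[OF sigma_finite_lborel] by blast
  have "A \<subseteq> sets lebesgue" "\<forall>a\<in>A. emeasure lebesgue a \<noteq> \<infinity>"
    using A(2,4) by auto
  then show ?thesis
    unfolding sigma_finite_measure_def using A(1,3) by (intro exI[of _ A]) auto
qed

interpretation lebesgue_pair: pair_sigma_finite "lebesgue :: real measure" "lebesgue :: real measure"
  by (simp add: pair_sigma_finite_def sigma_finite_lebesgue)

lemma lebesgue_measurable_ident [measurable]:
  "(\<lambda>x::'a::euclidean_space. x) \<in> borel_measurable lebesgue"
  by (rule measurable_completion) simp

lemma AE_lebesgue_neq: "AE x in (lebesgue :: 'a::euclidean_space measure). x \<noteq> c"
  by (rule AE_completion) (rule AE_lborel_singleton)

lemma integral_lebesgue_on_Icc: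
  fixes f :: "real \<Rightarrow> real"
  shows "integral\<^sup>L (lebesgue_on {a..b}) f = (\<integral>x. indicator {a..b} x * f x \<partial>lebesgue)"
  using integral_restrict_space[of "{a..b}" lebesgue f] by simp

lemma integrable_lebesgue_on_Icc:
  fixes f :: "real \<Rightarrow> real"
  shows "integrable (lebesgue_on {a..b}) f \<longleftrightarrow> integrable lebesgue (\<lambda>x. indicator {a..b} x * f x)"
  using integrable_restrict_space[of "{a..b}" lebesgue f] by simp

lemma AE_lebesgue_on_Icc_if_Ioo:
  assumes "AE t in lebesgue_on {a<..<b}. P t"
  shows "AE t in lebesgue_on {a..(b::real)}. P t"
proof -
  have "AE t in lebesgue. t \<in> {a<..<b} \<longrightarrow> P t"
    using assms by (subst (asm) AE_restrict_space_iff) auto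
  with AE_lebesgue_neq[of a] AE_lebesgue_neq[of b] have "AE t in lebesgue. t \<in> {a..b} \<longrightarrow> P t"
    by eventually_elim auto
  then show ?thesis by (subst AE_restrict_space_iff) auto
qed

lemma AE_lebesgue_on_subset:
  assumes "AE t in lebesgue_on A. P t" "A \<in> sets lebesgue" "B \<in> sets lebesgue" "B \<subseteq> A"
  shows "AE t in lebesgue_on B. P t"
  using assms by (auto simp: AE_restrict_space_iff elim!: AE_mp)

lemma integrable_product_of_integrable:
  fixes u w :: "real \<Rightarrow> real"
  assumes "integrable lebesgue u" "integrable lebesgue w"
  shows "integrable (lebesgue \<Otimes>\<^sub>M lebesgue) (\<lambda>(s, r). u s * w r)"
proof (rule lebesgue_pair.Fubini_integrable)
  show "(\<lambda>(s, r). u s * w r) \<in> borel_measurable (lebesgue \<Otimes>\<^sub>M lebesgue)"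
    using assms by measurable
  have "integrable lebesgue (\<lambda>s. norm (u s) * (\<integral>r. norm (w r) \<partial>lebesgue))"
    using assms(1) by (intro integrable_mult_left integrable_norm)
  then show "integrable lebesgue (\<lambda>s. \<integral>r. norm ((\<lambda>(s, r). u s * w r) (s, r)) \<partial>lebesgue)"
    by (simp add: abs_mult)
  show "AE s in lebesgue. integrable lebesgue (\<lambda>r. (\<lambda>(s, r). u s * w r) (s, r))"
    using assms(2) by (intro AE_I2) simp
qed

text \<open>Fubini on the two triangles \<open>r \<le> s\<close> and \<open>s < r\<close> of the plane; on the second one
  the inner integral may be taken over \<open>s \<le> r\<close> because the diagonal is null.\<close>

lemma product_of_integrals_triangles:
  fixes u w :: "real \<Rightarrow> real"
  assumes u: "integrable lebesgue u" and w: "integrable lebesgue w"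
  shows "(\<integral>s. u s \<partial>lebesgue) * (\<integral>r. w r \<partial>lebesgue)
    = (\<integral>s. u s * (\<integral>r. indicator {..s} r * w r \<partial>lebesgue) \<partial>lebesgue)
    + (\<integral>r. w r * (\<integral>s. indicator {..r} s * u s \<partial>lebesgue) \<partial>lebesgue)"
proof -
  have [measurable]: "u \<in> borel_measurable lebesgue" "w \<in> borel_measurable lebesgue"
    using u w by auto
  have [measurable]: "fst \<in> borel_measurable (lebesgue \<Otimes>\<^sub>M lebesgue :: (real \<times> real) measure)"
    using measurable_compose[OF measurable_fst[of lebesgue lebesgue] lebesgue_measurable_ident] by simp
  have [measurable]: "snd \<in> borel_measurable (lebesgue \<Otimes>\<^sub>M lebesgue :: (real \<times> real) measure)"
    using measurable_compose[OF measurable_snd[of lebesgue lebesgue] lebesgue_measurable_ident] by simp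
  define H where "H = (\<lambda>(s, r). u s * w r)"
  define H1 where "H1 s r = (if r \<le> s then u s * w r else 0)" for s r
  define H2 where "H2 s r = (if s < r then u s * w r else 0)" for s r
  have iH: "integrable (lebesgue \<Otimes>\<^sub>M lebesgue) H"
    unfolding H_def using u w by (rule integrable_product_of_integrable)
  have [measurable]: "case_prod H1 \<in> borel_measurable (lebesgue \<Otimes>\<^sub>M lebesgue)"
    "case_prod H2 \<in> borel_measurable (lebesgue \<Otimes>\<^sub>M lebesgue)"
    unfolding H1_def H2_def by measurable
  have iH1: "integrable (lebesgue \<Otimes>\<^sub>M lebesgue) (case_prod H1)"
    by (rule Bochner_Integration.integrable_bound[OF iH]) (auto simp: H_def H1_def indicator_def abs_mult)
  have iH2: "integrable (lebesgue \<Otimes>\<^sub>M lebesgue) (case_prod H2)"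
    by (rule Bochner_Integration.integrable_bound[OF iH]) (auto simp: H_def H2_def indicator_def abs_mult)
  have "(\<integral>s. u s \<partial>lebesgue) * (\<integral>r. w r \<partial>lebesgue) = integral\<^sup>L (lebesgue \<Otimes>\<^sub>M lebesgue) H"
    using lebesgue_pair.integral_fst[of "\<lambda>s r. u s * w r"] iH by (simp add: H_def)
  also have "\<dots> = integral\<^sup>L (lebesgue \<Otimes>\<^sub>M lebesgue) (case_prod H1)
      + integral\<^sup>L (lebesgue \<Otimes>\<^sub>M lebesgue) (case_prod H2)"
    unfolding Bochner_Integration.integral_add[OF iH1 iH2, symmetric]
    by (rule Bochner_Integration.integral_cong) (auto simp: H_def H1_def H2_def indicator_def)
  also have "integral\<^sup>L (lebesgue \<Otimes>\<^sub>M lebesgue) (case_prod H1)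
      = (\<integral>s. u s * (\<integral>r. indicator {..s} r * w r \<partial>lebesgue) \<partial>lebesgue)"
  proof -
    have "(\<integral>r. H1 s r \<partial>lebesgue) = u s * (\<integral>r. indicator {..s} r * w r \<partial>lebesgue)" for s
    proof -
      have "(\<lambda>r. H1 s r) = (\<lambda>r. u s * (indicator {..s} r * w r))"
        by (auto simp: H1_def indicator_def)
      then show ?thesis by simp
    qed
    moreover have "integral\<^sup>L (lebesgue \<Otimes>\<^sub>M lebesgue) (case_prod H1)
        = (\<integral>s. (\<integral>r. H1 s r \<partial>lebesgue) \<partial>lebesgue)"
      using lebesgue_pair.integral_fst[of H1] iH1 by simp
    ultimately show ?thesis by simp
  qed
  also have "integral\<^sup>L (lebesgue \<Otimes>\<^sub>M lebesgue) (case_prod H2)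
      = (\<integral>r. w r * (\<integral>s. indicator {..r} s * u s \<partial>lebesgue) \<partial>lebesgue)"
  proof -
    have "(\<integral>s. H2 s r \<partial>lebesgue) = w r * (\<integral>s. indicator {..r} s * u s \<partial>lebesgue)" for r
    proof -
      have "(\<integral>s. H2 s r \<partial>lebesgue) = (\<integral>s. w r * (indicator {..r} s * u s) \<partial>lebesgue)"
      proof (rule integral_cong_AE)
        show "(\<lambda>s. H2 s r) \<in> borel_measurable lebesgue" unfolding H2_def by measurable
        show "(\<lambda>s. w r * (indicator {..r} s * u s)) \<in> borel_measurable lebesgue" by measurable
        show "AE s in lebesgue. H2 s r = w r * (indicator {..r} s * u s)"
          using AE_lebesgue_neq[of r] by eventually_elim (auto simp: H2_def indicator_def)
      qed
      then show ?thesis by simp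
    qed
    then show ?thesis using lebesgue_pair.integral_snd[of H2] iH2 by simp
  qed
  finally show ?thesis .
qed

section \<open>Primitives of integrable functions on an interval\<close>

definition primitive_on :: "real \<Rightarrow> (real \<Rightarrow> real) \<Rightarrow> (real \<Rightarrow> real) \<Rightarrow> bool" where
  "primitive_on T p p' \<longleftrightarrow> integrable (lebesgue_on {0..T}) p'
     \<and> (\<forall>t\<in>{0..T}. p t = p 0 + integral\<^sup>L (lebesgue_on {0..t}) p')"

lemma primitive_on_integrable: "primitive_on T p p' \<Longrightarrow> integrable (lebesgue_on {0..T}) p'"
  unfolding primitive_on_def by blast

lemma primitive_on_integrable_Icc:
  assumes "primitive_on T p p'" "t \<in> {0..T}"
  shows "integrable (lebesgue_on {0..t}) p'"
  using Equivalence_Lebesgue_Henstock_Integration.integrable_subinterval[OF primitive_on_integrable[OF assms(1)]]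
    assms(2) by simp

lemma primitive_on_eq:
  "primitive_on T p p' \<Longrightarrow> t \<in> {0..T} \<Longrightarrow> p t = p 0 + integral\<^sup>L (lebesgue_on {0..t}) p'"
  unfolding primitive_on_def by blast

lemma primitive_on_continuous: assumes "primitive_on T p p'" shows "continuous_on {0..T} p"
proof -
  have "continuous_on {0..T} (\<lambda>t. integral\<^sup>L (lebesgue_on {0..t}) p')"
    by (rule indefinite_integral_continuous_real[OF primitive_on_integrable[OF assms]])
  then have "continuous_on {0..T} (\<lambda>t. p 0 + integral\<^sup>L (lebesgue_on {0..t}) p')"
    by (intro continuous_on_add continuous_on_const)
  then show ?thesis
    by (rule continuous_on_eq) (simp add: primitive_on_eq[OF assms, symmetric])
qed

lemma primitive_on_const: "primitive_on T (\<lambda>t. c) (\<lambda>t. 0)"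
  by (simp add: primitive_on_def)

lemma primitive_on_add:
  assumes P: "primitive_on T p p'" and Q: "primitive_on T q q'"
  shows "primitive_on T (\<lambda>t. p t + q t) (\<lambda>t. p' t + q' t)"
  unfolding primitive_on_def
proof (intro conjI ballI)
  show "integrable (lebesgue_on {0..T}) (\<lambda>t. p' t + q' t)"
    using primitive_on_integrable[OF P] primitive_on_integrable[OF Q]
    by (rule Bochner_Integration.integrable_add)
  fix t assume t: "t \<in> {0..T}"
  have "integral\<^sup>L (lebesgue_on {0..t}) (\<lambda>t. p' t + q' t)
      = integral\<^sup>L (lebesgue_on {0..t}) p' + integral\<^sup>L (lebesgue_on {0..t}) q'"
    using primitive_on_integrable_Icc[OF P t] primitive_on_integrable_Icc[OF Q t]
    by (rule Bochner_Integration.integral_add)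
  then show "p t + q t = p 0 + q 0 + integral\<^sup>L (lebesgue_on {0..t}) (\<lambda>t. p' t + q' t)"
    using primitive_on_eq[OF P t] primitive_on_eq[OF Q t] by simp
qed

lemma primitive_on_cmult:
  assumes "primitive_on T p p'"
  shows "primitive_on T (\<lambda>t. c * p t) (\<lambda>t. c * p' t)"
  unfolding primitive_on_def
proof (intro conjI ballI)
  show "integrable (lebesgue_on {0..T}) (\<lambda>t. c * p' t)"
    using primitive_on_integrable[OF assms] by simp
  fix t assume "t \<in> {0..T}"
  from primitive_on_eq[OF assms this]
  show "c * p t = c * p 0 + integral\<^sup>L (lebesgue_on {0..t}) (\<lambda>t. c * p' t)"
    by (simp add: distrib_left)
qed

lemma primitive_on_sum:
  assumes "finite I" "\<And>i. i \<in> I \<Longrightarrow> primitive_on T (p i) (p' i)"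
  shows "primitive_on T (\<lambda>t. \<Sum>i\<in>I. p i t) (\<lambda>t. \<Sum>i\<in>I. p' i t)"
  using assms
proof (induction I rule: finite_induct)
  case empty
  then show ?case using primitive_on_const[of T 0] by simp
next
  case (insert x F)
  then have "primitive_on T (\<lambda>t. p x t + (\<Sum>i\<in>F. p i t)) (\<lambda>t. p' x t + (\<Sum>i\<in>F. p' i t))"
    by (intro primitive_on_add) auto
  then show ?case using insert(1,2) by simp
qed

lemma primitive_on_cong:
  assumes P: "primitive_on T p p'" and "0 \<le> T"
    and eq: "\<And>t. t \<in> {0..T} \<Longrightarrow> p t = q t" and eq': "\<And>t. t \<in> {0..T} \<Longrightarrow> p' t = q' t"
  shows "primitive_on T q q'"
  unfolding primitive_on_def
proof (intro conjI ballI)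
  have "integrable (lebesgue_on {0..T}) p' = integrable (lebesgue_on {0..T}) q'"
    by (rule Bochner_Integration.integrable_cong) (simp_all add: eq')
  then show "integrable (lebesgue_on {0..T}) q'"
    using primitive_on_integrable[OF P] by simp
  fix t assume t: "t \<in> {0..T}"
  have "integral\<^sup>L (lebesgue_on {0..t}) p' = integral\<^sup>L (lebesgue_on {0..t}) q'"
    by (rule Bochner_Integration.integral_cong) (use t eq' in auto)
  moreover have "p 0 = q 0" "p t = q t" using eq \<open>0 \<le> T\<close> t by auto
  ultimately show "q t = q 0 + integral\<^sup>L (lebesgue_on {0..t}) q'"
    using primitive_on_eq[OF P t] by simp
qed

lemma integrable_mult_continuous_on:
  fixes f g :: "real \<Rightarrow> real"
  assumes f: "integrable (lebesgue_on {a..b}) f" and g: "continuous_on {a..b} g"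
  shows "integrable (lebesgue_on {a..b}) (\<lambda>x. f x * g x)"
proof -
  obtain C where C: "\<And>x. x \<in> {a..b} \<Longrightarrow> \<bar>g x\<bar> \<le> C"
    using compact_imp_bounded[OF compact_continuous_image[OF g compact_Icc]]
    unfolding bounded_iff by (metis image_eqI real_norm_def)
  have [measurable]: "g \<in> borel_measurable (lebesgue_on {a..b})"
    by (rule continuous_imp_measurable_on_sets_lebesgue[OF g]) auto
  have [measurable]: "f \<in> borel_measurable (lebesgue_on {a..b})"
    using f by auto
  show ?thesis
  proof (rule Bochner_Integration.integrable_bound[where f="\<lambda>x. C * f x"])
    show "integrable (lebesgue_on {a..b}) (\<lambda>x. C * f x)" using f by simp
    show "(\<lambda>x. f x * g x) \<in> borel_measurable (lebesgue_on {a..b})" by measurable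
    show "AE x in lebesgue_on {a..b}. norm (f x * g x) \<le> norm (C * f x)"
    proof (rule AE_I2)
      fix x assume "x \<in> space (lebesgue_on {a..b})"
      then have "\<bar>g x\<bar> \<le> \<bar>C\<bar>" using C[of x] by simp
      from mult_right_mono[OF this abs_ge_zero[of "f x"]]
      show "norm (f x * g x) \<le> norm (C * f x)"
        by (simp add: abs_mult mult.commute)
    qed
  qed
qed

lemma primitive_on_increments_product:
  assumes P: "primitive_on T p p'" and Q: "primitive_on T q q'" and t: "t \<in> {0..T}"
  shows "(p t - p 0) * (q t - q 0) = integral\<^sup>L (lebesgue_on {0..t}) (\<lambda>s. p' s * (q s - q 0))
          + integral\<^sup>L (lebesgue_on {0..t}) (\<lambda>s. q' s * (p s - p 0))"
proof -
  define cut where "cut g s = indicator {0..t} s * g s" for g :: "real \<Rightarrow> real" and s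
  have increment: "(\<integral>s. cut g' s \<partial>lebesgue) = g t - g 0"
    and triangle: "(\<integral>s. cut g' s * (\<integral>r. indicator {..s} r * cut h' r \<partial>lebesgue) \<partial>lebesgue)
      = integral\<^sup>L (lebesgue_on {0..t}) (\<lambda>s. g' s * (h s - h 0))"
    if G: "primitive_on T g g'" and H: "primitive_on T h h'" for g g' h h'
  proof -
    show "(\<integral>s. cut g' s \<partial>lebesgue) = g t - g 0"
      using primitive_on_eq[OF G t] by (simp add: cut_def integral_lebesgue_on_Icc)
    have "(\<integral>r. indicator {..s} r * cut h' r \<partial>lebesgue) = h s - h 0" if s: "s \<in> {0..t}" for s
    proof -
      have "(\<integral>r. indicator {..s} r * cut h' r \<partial>lebesgue) = (\<integral>r. indicator {0..s} r * h' r \<partial>lebesgue)"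
        using s by (intro Bochner_Integration.integral_cong) (auto simp: cut_def indicator_def)
      then show ?thesis using primitive_on_eq[OF H, of s] s t by (simp add: integral_lebesgue_on_Icc)
    qed
    then have "(\<integral>s. cut g' s * (\<integral>r. indicator {..s} r * cut h' r \<partial>lebesgue) \<partial>lebesgue)
        = (\<integral>s. indicator {0..t} s * (g' s * (h s - h 0)) \<partial>lebesgue)"
      by (intro Bochner_Integration.integral_cong) (auto simp: cut_def indicator_def)
    then show "(\<integral>s. cut g' s * (\<integral>r. indicator {..s} r * cut h' r \<partial>lebesgue) \<partial>lebesgue)
        = integral\<^sup>L (lebesgue_on {0..t}) (\<lambda>s. g' s * (h s - h 0))"
      by (simp add: integral_lebesgue_on_Icc)
  qed
  have "integrable lebesgue (cut p')" "integrable lebesgue (cut q')"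
    using primitive_on_integrable_Icc[OF P t] primitive_on_integrable_Icc[OF Q t]
    unfolding cut_def integrable_lebesgue_on_Icc by blast+
  from product_of_integrals_triangles[OF this] show ?thesis
    unfolding increment[OF P Q] increment[OF Q P] triangle[OF P Q] triangle[OF Q P] .
qed

lemma primitive_on_mult:
  assumes P: "primitive_on T p p'" and Q: "primitive_on T q q'"
  shows "primitive_on T (\<lambda>t. p t * q t) (\<lambda>t. p' t * q t + p t * q' t)"
proof -
  have i1: "integrable (lebesgue_on {0..T}) (\<lambda>t. p' t * q t)"
    by (rule integrable_mult_continuous_on[OF primitive_on_integrable[OF P] primitive_on_continuous[OF Q]])
  have i2: "integrable (lebesgue_on {0..T}) (\<lambda>t. p t * q' t)"
    using integrable_mult_continuous_on[OF primitive_on_integrable[OF Q] primitive_on_continuous[OF P]]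
    by (simp add: mult.commute)
  show ?thesis unfolding primitive_on_def
  proof (intro conjI ballI)
    show "integrable (lebesgue_on {0..T}) (\<lambda>t. p' t * q t + p t * q' t)"
      using i1 i2 by (rule Bochner_Integration.integrable_add)
    fix t assume t: "t \<in> {0..T}"
    have "{0..t} \<subseteq> {0..T}" using t by auto
    note restrict = Equivalence_Lebesgue_Henstock_Integration.integrable_subinterval[OF _ this]
    have i1t: "integrable (lebesgue_on {0..t}) (\<lambda>t. p' t * q t)" by (rule restrict[OF i1])
    have i2t: "integrable (lebesgue_on {0..t}) (\<lambda>t. p t * q' t)" by (rule restrict[OF i2])
    have ip: "integrable (lebesgue_on {0..t}) p'" and iq: "integrable (lebesgue_on {0..t}) q'"
      using primitive_on_integrable_Icc[OF P t] primitive_on_integrable_Icc[OF Q t] .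
    have shift: "integral\<^sup>L (lebesgue_on {0..t}) (\<lambda>s. g' s * (h s - h 0))
        = integral\<^sup>L (lebesgue_on {0..t}) (\<lambda>s. g' s * h s) - h 0 * integral\<^sup>L (lebesgue_on {0..t}) g'"
      if "integrable (lebesgue_on {0..t}) (\<lambda>s. g' s * h s)" "integrable (lebesgue_on {0..t}) g'"
      for g' h :: "real \<Rightarrow> real"
    proof -
      have "(\<lambda>s. g' s * (h s - h 0)) = (\<lambda>s. g' s * h s - h 0 * g' s)"
        by (simp add: algebra_simps)
      then show ?thesis
        using Bochner_Integration.integral_diff[OF that(1) integrable_mult_right[OF that(2), of "h 0"]]
        by simp
    qed
    have i2t': "integrable (lebesgue_on {0..t}) (\<lambda>s. q' s * p s)"
      using i2t by (simp add: mult.commute)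
    have "(p t - p 0) * (q t - q 0) = integral\<^sup>L (lebesgue_on {0..t}) (\<lambda>s. p' s * q s)
        - q 0 * integral\<^sup>L (lebesgue_on {0..t}) p' + (integral\<^sup>L (lebesgue_on {0..t}) (\<lambda>s. q' s * p s)
        - p 0 * integral\<^sup>L (lebesgue_on {0..t}) q')"
      unfolding primitive_on_increments_product[OF P Q t] shift[OF i1t ip] shift[OF i2t' iq] ..
    moreover have "integral\<^sup>L (lebesgue_on {0..t}) (\<lambda>s. p' s * q s + p s * q' s)
        = integral\<^sup>L (lebesgue_on {0..t}) (\<lambda>s. p' s * q s) + integral\<^sup>L (lebesgue_on {0..t}) (\<lambda>s. q' s * p s)"
      using Bochner_Integration.integral_add[OF i1t i2t] by (simp add: mult.commute)
    moreover note primitive_on_eq[OF P t] primitive_on_eq[OF Q t]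
    ultimately show "p t * q t = p 0 * q 0 + integral\<^sup>L (lebesgue_on {0..t}) (\<lambda>t. p' t * q t + p t * q' t)"
      by algebra
  qed
qed

lemma primitive_on_integral:
  assumes "integrable (lebesgue_on {0..T}) g"
  shows "primitive_on T (\<lambda>t. integral\<^sup>L (lebesgue_on {0..t}) g) g"
proof -
  have "integral\<^sup>L (lebesgue_on {0..0}) g = 0"
    by (rule integral_eq_zero_null_sets) auto
  then show ?thesis using assms by (simp add: primitive_on_def)
qed

lemma primitive_on_le_integral:
  assumes P: "primitive_on T p p'" and t: "t \<in> {0..T}" and g: "integrable (lebesgue_on {0..t}) g"
    and le: "AE s in lebesgue_on {0..t}. p' s \<le> g s"
  shows "p t \<le> p 0 + integral\<^sup>L (lebesgue_on {0..t}) g"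
proof -
  have "integral\<^sup>L (lebesgue_on {0..t}) p' \<le> integral\<^sup>L (lebesgue_on {0..t}) g"
    by (rule integral_mono_AE[OF primitive_on_integrable_Icc[OF P t] g le])
  then show ?thesis using primitive_on_eq[OF P t] by simp
qed

section \<open>Functions with vanishing integrals\<close>

text \<open>Half-lines generate the Borel sets, so the densities of the positive and negative parts
  coincide.\<close>

lemma AE_lborel_zero_if_integrals_Ioi_zero:
  fixes h :: "real \<Rightarrow> real"
  assumes h: "integrable lborel h" and zero: "\<And>x. (\<integral>y. indicator {x<..} y * h y \<partial>lborel) = 0"
  shows "AE y in lborel. h y = 0"
proof -
  define hp where "hp y = max 0 (h y)" for y
  define hm where "hm y = max 0 (- h y)" for y
  have [measurable]: "h \<in> borel_measurable lborel" using h by auto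
  have [measurable]: "hp \<in> borel_measurable lborel" unfolding hp_def by measurable
  have [measurable]: "hm \<in> borel_measurable lborel" unfolding hm_def by measurable
  have ihp: "integrable lborel hp" and ihm: "integrable lborel hm"
    unfolding hp_def hm_def using h by (intro integrable_max; simp)+
  have hp_nonneg: "0 \<le> hp y" and hm_nonneg: "0 \<le> hm y" for y
    by (simp_all add: hp_def hm_def)
  have cut: "integrable lborel (\<lambda>y. indicator {x<..} y * g y)" if "integrable lborel g" for x and g :: "real \<Rightarrow> real"
    using integrable_mult_indicator[of "{x<..}" lborel g] that by simp
  have emeasure_density: "emeasure (density lborel (\<lambda>y. ennreal (g y))) {x<..}
      = ennreal (\<integral>y. indicator {x<..} y * g y \<partial>lborel)"
    if g: "integrable lborel g" "\<And>y. 0 \<le> g y" for x and g :: "real \<Rightarrow> real"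
  proof -
    have [measurable]: "g \<in> borel_measurable lborel" using g(1) by auto
    have "emeasure (density lborel (\<lambda>y. ennreal (g y))) {x<..}
        = (\<integral>\<^sup>+ y. ennreal (g y) * indicator {x<..} y \<partial>lborel)"
      by (rule emeasure_density) simp_all
    also have "\<dots> = (\<integral>\<^sup>+ y. ennreal (indicator {x<..} y * g y) \<partial>lborel)"
      by (intro nn_integral_cong) (simp add: indicator_def)
    also have "\<dots> = ennreal (\<integral>y. indicator {x<..} y * g y \<partial>lborel)"
      by (rule nn_integral_eq_integral[OF cut[OF g(1)]]) (use g(2) in auto)
    finally show ?thesis .
  qed
  have same_tails: "emeasure (density lborel (\<lambda>y. ennreal (hp y))) {x<..}
      = emeasure (density lborel (\<lambda>y. ennreal (hm y))) {x<..}" for x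
  proof -
    have "(\<lambda>y. indicator {x<..} y * h y) = (\<lambda>y. indicator {x<..} y * hp y - indicator {x<..} y * hm y)"
      by (auto simp: hp_def hm_def max_def)
    then have "(\<integral>y. indicator {x<..} y * hp y \<partial>lborel) = (\<integral>y. indicator {x<..} y * hm y \<partial>lborel)"
      using zero[of x] Bochner_Integration.integral_diff[OF cut[OF ihp] cut[OF ihm], of x] by simp
    then show ?thesis
      unfolding emeasure_density[OF ihp hp_nonneg] emeasure_density[OF ihm hm_nonneg] by simp
  qed
  have "density lborel (\<lambda>y. ennreal (hp y)) = density lborel (\<lambda>y. ennreal (hm y))"
  proof (rule measure_eqI_lessThan)
    show "emeasure (density lborel (\<lambda>y. ennreal (hp y))) {x<..} < \<infinity>" for x
      unfolding emeasure_density[OF ihp hp_nonneg] by simp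
  qed (simp_all add: same_tails)
  then have "AE y in lborel. ennreal (hp y) = ennreal (hm y)"
    by (rule sigma_finite_measure.density_unique[OF sigma_finite_lborel, rotated 2]) simp_all
  then show ?thesis
    by eventually_elim (auto simp: hp_def hm_def max_def split: if_splits)
qed

lemma AE_lebesgue_zero_if_integrals_Ioi_zero:
  fixes g :: "real \<Rightarrow> real"
  assumes g: "integrable lebesgue g" and zero: "\<And>x. (\<integral>y. indicator {x<..} y * g y \<partial>lebesgue) = 0"
  shows "AE y in lebesgue. g y = 0"
proof -
  have g_meas [measurable]: "g \<in> borel_measurable lebesgue" using g by auto
  then obtain h where [measurable]: "h \<in> borel_measurable lborel" and "AE y in lborel. g y = h y"
    using completion_ex_borel_measurable_real by blast
  then have gh: "AE y in lebesgue. g y = h y" by (intro AE_completion)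
  have "integrable lebesgue g \<longleftrightarrow> integrable lebesgue h"
    using g gh by (intro integrable_cong_AE) (auto intro: measurable_completion)
  then have "integrable lborel h" using g integrable_completion[of h] by simp
  moreover have "(\<integral>y. indicator {x<..} y * h y \<partial>lborel) = 0" for x
  proof -
    have "(\<integral>y. indicator {x<..} y * h y \<partial>lborel) = (\<integral>y. indicator {x<..} y * h y \<partial>lebesgue)"
      by (rule integral_completion[symmetric]) measurable
    also have "\<dots> = (\<integral>y. indicator {x<..} y * g y \<partial>lebesgue)"
    proof (rule integral_cong_AE)
      show "(\<lambda>y. indicator {x<..} y * h y) \<in> borel_measurable lebesgue"
        by (rule measurable_completion) measurable
      show "(\<lambda>y. indicator {x<..} y * g y) \<in> borel_measurable lebesgue" by measurable
      show "AE y in lebesgue. indicator {x<..} y * h y = indicator {x<..} y * g y"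
        using gh by eventually_elim simp
    qed
    finally show ?thesis using zero by simp
  qed
  ultimately have "AE y in lborel. h y = 0" by (rule AE_lborel_zero_if_integrals_Ioi_zero)
  with gh show ?thesis by (auto dest: AE_completion elim: AE_mp)
qed

lemma AE_zero_if_indefinite_integral_zero:
  fixes g :: "real \<Rightarrow> real"
  assumes g: "integrable (lebesgue_on {0..T}) g" and T: "0 \<le> T"
    and zero: "\<And>t. t \<in> {0..T} \<Longrightarrow> integral\<^sup>L (lebesgue_on {0..t}) g = 0"
  shows "AE t in lebesgue_on {0..T}. g t = 0"
proof -
  define G where "G y = indicator {0..T} y * g y" for y
  have iG: "integrable lebesgue G"
    using g unfolding G_def integrable_lebesgue_on_Icc .
  have "(\<integral>y. indicator {x<..} y * G y \<partial>lebesgue) = 0" for x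
  proof -
    have "(\<lambda>y. indicator {x<..} y * G y) = (\<lambda>y. G y - indicator {..x} y * G y)"
      by (auto simp: indicator_def)
    moreover have "(\<lambda>y. indicator {..x} y * G y) = (\<lambda>y. indicator {0..min x T} y * g y)"
      by (auto simp: G_def indicator_def)
    moreover have "(\<integral>y. indicator {0..min x T} y * g y \<partial>lebesgue) = 0"
      using zero[of "min x T"] T by (cases "0 \<le> x") (auto simp: integral_lebesgue_on_Icc indicator_def)
    moreover have "(\<integral>y. G y \<partial>lebesgue) = 0"
      using zero[of T] T by (simp add: G_def integral_lebesgue_on_Icc)
    ultimately show ?thesis
      using Bochner_Integration.integral_diff[OF iG integrable_mult_indicator[OF _ iG, of "{..x}"]]
      by simp
  qed
  then have "AE y in lebesgue. G y = 0"
    by (rule AE_lebesgue_zero_if_integrals_Ioi_zero[OF iG])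
  then show ?thesis
    by (subst AE_restrict_space_iff) (auto simp: G_def elim!: AE_mp)
qed

lemma continuous_on_zero_if_AE_zero:
  fixes g :: "real \<Rightarrow> real"
  assumes g: "continuous_on {0..T} g" and zero: "AE t in lebesgue_on {0..T}. g t = 0"
    and t0: "t0 \<in> {0..T}" and T: "0 < T"
  shows "g t0 = 0"
proof (rule ccontr)
  assume "g t0 \<noteq> 0"
  then obtain d where d: "d > 0" "\<And>t. t \<in> {0..T} \<Longrightarrow> dist t t0 < d \<Longrightarrow> dist (g t) (g t0) < \<bar>g t0\<bar>"
    using g t0 unfolding continuous_on_iff by (metis zero_less_abs_iff)
  define a where "a = max 0 (t0 - d/2)"
  define b where "b = min T (t0 + d/2)"
  have ab: "a < b" "{a..b} \<subseteq> {0..T}" using d(1) T t0 by (auto simp: a_def b_def)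
  have "g t \<noteq> 0" if "t \<in> {a..b}" for t
    using d(2)[of t] ab(2) that d(1) by (force simp: a_def b_def dist_real_def)
  moreover have "AE t in lebesgue. t \<in> {0..T} \<longrightarrow> g t = 0"
    using zero by (subst (asm) AE_restrict_space_iff) auto
  ultimately have "AE t in lebesgue. t \<notin> {a..b}"
    using ab(2) by (auto elim!: AE_mp)
  then have "{a..b} \<in> null_sets lebesgue"
    by (subst AE_iff_null_sets) auto
  then have "emeasure lebesgue {a..b} = 0" by auto
  with ab(1) show False by simp
qed

lemma primitive_on_AE_zero:
  assumes P: "primitive_on T p p'" and T: "0 < T" and zero: "AE t in lebesgue_on {0..T}. p t = 0"
  shows "AE t in lebesgue_on {0..T}. p' t = 0"
proof -
  have "p t = 0" if "t \<in> {0..T}" for t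
    using continuous_on_zero_if_AE_zero[OF primitive_on_continuous[OF P] zero that T] .
  then have "integral\<^sup>L (lebesgue_on {0..t}) p' = 0" if "t \<in> {0..T}" for t
    using primitive_on_eq[OF P that] that T by simp
  from AE_zero_if_indefinite_integral_zero[OF primitive_on_integrable[OF P] _ this] T
  show ?thesis by simp
qed

section \<open>Gronwall's inequality\<close>

lemma gronwall_integral:
  fixes E a :: "real \<Rightarrow> real"
  assumes E: "continuous_on {0..T} E" and K: "K > 0"
    and mono: "\<And>s t. 0 \<le> s \<Longrightarrow> s \<le> t \<Longrightarrow> t \<le> T \<Longrightarrow> a s \<le> a t"
    and ineq: "\<And>t. t \<in> {0..T} \<Longrightarrow> E t \<le> a t + K * integral\<^sup>L (lebesgue_on {0..t}) E"
    and t0: "t0 \<in> {0..T}"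
  shows "E t0 \<le> a t0 * exp (K * t0)"
proof -
  define U where "U t = integral {0..t} E" for t
  define c where "c = a t0 / K"
  have E0: "continuous_on {0..t0} E" using t0 by (intro continuous_on_subset[OF E]) auto
  have bound: "E t \<le> K * (U t + c)" if t: "t \<in> {0..t0}" for t
  proof -
    have tT: "t \<in> {0..T}" using t t0 by auto
    have "continuous_on {0..t} E" using tT by (intro continuous_on_subset[OF E]) auto
    then have "integral\<^sup>L (lebesgue_on {0..t}) E = U t"
      unfolding U_def by (intro lebesgue_integral_eq_integral continuous_imp_integrable_real) auto
    then have "E t \<le> a t + K * U t" using ineq[OF tT] by simp
    also have "a t \<le> a t0" using mono[of t t0] t t0 by auto
    finally show ?thesis using K by (simp add: c_def algebra_simps)
  qed
  text \<open>\<open>exp (-K t) (U t + c)\<close> is nonincreasing on \<open>[0, t0]\<close>.\<close>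
  define g where "g t = exp (- K * t) * (U t + c)" for t
  define g' where "g' t = exp (- K * t) * (E t - K * (U t + c))" for t
  have "(g has_vector_derivative g' t) (at t within {0..t0})" if "t \<in> {0..t0}" for t
  proof -
    have U': "(U has_real_derivative E t) (at t within {0..t0})"
      using integral_has_vector_derivative[OF E0 that] unfolding U_def
      by (simp add: has_real_derivative_iff_has_vector_derivative)
    have "(g has_real_derivative g' t) (at t within {0..t0})"
      unfolding g_def g'_def by (rule derivative_eq_intros U' | simp add: algebra_simps)+
    then show ?thesis by (simp add: has_real_derivative_iff_has_vector_derivative)
  qed
  then have ftc: "(g' has_integral (g t0 - g 0)) {0..t0}"
    using t0 by (intro fundamental_theorem_of_calculus) auto
  have "g t0 - g 0 \<le> 0"
  proof (rule has_integral_le[OF ftc has_integral_0])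
    show "g' t \<le> 0" if "t \<in> {0..t0}" for t
      using bound[OF that] by (simp add: g'_def mult_nonneg_nonpos)
  qed
  then have "U t0 + c \<le> exp (K * t0) * c"
    by (simp add: g_def U_def exp_minus field_simps)
  have "E t0 \<le> K * (U t0 + c)" using bound[of t0] t0 by simp
  also have "\<dots> \<le> K * (exp (K * t0) * c)" using \<open>U t0 + c \<le> exp (K * t0) * c\<close> K by simp
  also have "\<dots> = a t0 * exp (K * t0)" using K by (simp add: c_def)
  finally show ?thesis .
qed

section \<open>Slices of functions on a product\<close>

lemma AE_lebesgue_on_if_AE_lborel:
  assumes "AE t in lborel. t \<in> A \<longrightarrow> P t" "A \<in> sets lebesgue"
  shows "AE t in lebesgue_on A. P t"
  using AE_completion[OF assms(1)] assms(2) by (subst AE_restrict_space_iff) auto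

lemma lebesgue_pair_borel_representative:
  fixes G :: "real \<times> 'b::euclidean_space \<Rightarrow> real"
  assumes "G \<in> borel_measurable lebesgue"
  obtains h where "h \<in> borel_measurable (lborel \<Otimes>\<^sub>M lborel)"
    "AE t in lborel. AE x in lborel. G (t, x) = h (t, x)" "AE z in lebesgue. G z = h z"
proof -
  obtain h where h: "h \<in> borel_measurable lborel" and ae: "AE z in lborel. G z = h z"
    using completion_ex_borel_measurable_real[of G lborel] assms by blast
  have "AE t in lborel. AE x in lborel. G (t, x) = h (t, x)"
    using ae unfolding lborel_prod[symmetric] by (rule lborel_pair.AE_pair)
  moreover have "AE z in lebesgue. G z = h z" using ae by (rule AE_completion)
  ultimately show ?thesis using that h by (simp add: lborel_prod)
qed

lemma AE_slice_measurable:
  fixes g :: "real \<times> 'b::euclidean_space \<Rightarrow> real"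
  assumes g: "g \<in> borel_measurable (lebesgue_on (A \<times> \<Omega>))"
    and sets: "A \<times> \<Omega> \<in> sets lebesgue" "A \<in> sets lebesgue" "\<Omega> \<in> sets lebesgue"
  shows "AE t in lebesgue_on A. (\<lambda>x. g (t, x)) \<in> borel_measurable (lebesgue_on \<Omega>)"
proof -
  define G where "G z = indicator (A \<times> \<Omega>) z * g z" for z
  have "G \<in> borel_measurable lebesgue"
    using g sets unfolding G_def by (subst (asm) borel_measurable_restrict_space_iff) auto
  then obtain h where h: "h \<in> borel_measurable (lborel \<Otimes>\<^sub>M lborel)"
    and Gh: "AE t in lborel. AE x in lborel. G (t, x) = h (t, x)"
    by (rule lebesgue_pair_borel_representative)
  have "AE t in lborel. t \<in> A \<longrightarrow> (\<lambda>x. g (t, x)) \<in> borel_measurable (lebesgue_on \<Omega>)"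
    using Gh
  proof eventually_elim
    case (elim t)
    have "(\<lambda>x. h (t, x)) \<in> borel_measurable lborel"
      using measurable_compose[OF measurable_Pair1'[of t lborel lborel] h] by simp
    then have "(\<lambda>x. G (t, x)) \<in> borel_measurable lebesgue"
      by (rule borel_measurable_AE[OF measurable_completion])
        (use AE_completion[OF elim] in \<open>auto elim: AE_mp\<close>)
    moreover have "t \<in> A \<Longrightarrow> (\<lambda>x. G (t, x)) = (\<lambda>x. indicator \<Omega> x *\<^sub>R g (t, x))"
      by (auto simp: G_def indicator_def)
    ultimately show ?case
      using sets(3) by (subst borel_measurable_restrict_space_iff) auto
  qed
  then show ?thesis using sets(2) by (rule AE_lebesgue_on_if_AE_lborel)
qed

lemma AE_slice_AE:
  fixes P :: "real \<times> 'b::euclidean_space \<Rightarrow> bool"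
  assumes P: "AE z in lebesgue_on (A \<times> \<Omega>). P z"
    and sets: "A \<times> \<Omega> \<in> sets lebesgue" "A \<in> sets lebesgue" "\<Omega> \<in> sets lebesgue"
  shows "AE t in lebesgue_on A. AE x in lebesgue_on \<Omega>. P (t, x)"
proof -
  have "AE z in lebesgue. z \<in> A \<times> \<Omega> \<longrightarrow> P z"
    using P sets(1) by (subst (asm) AE_restrict_space_iff) auto
  then have "AE z in (lborel :: (real \<times> 'b) measure). z \<in> A \<times> \<Omega> \<longrightarrow> P z"
    by (simp add: AE_completion_iff)
  then have "AE z in (lborel \<Otimes>\<^sub>M lborel :: (real \<times> 'b) measure). z \<in> A \<times> \<Omega> \<longrightarrow> P z"
    unfolding lborel_prod .
  then have "AE t in lborel. AE x in lborel. (t, x) \<in> A \<times> \<Omega> \<longrightarrow> P (t, x)"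
    by (rule lborel_pair.AE_pair)
  then have "AE t in lborel. t \<in> A \<longrightarrow> (AE x in lebesgue_on \<Omega>. P (t, x))"
  proof eventually_elim
    case (elim t)
    show ?case
    proof
      assume "t \<in> A"
      from elim have "AE x in lborel. x \<in> \<Omega> \<longrightarrow> P (t, x)"
        by eventually_elim (use \<open>t \<in> A\<close> in auto)
      then have "AE x in lebesgue. x \<in> \<Omega> \<longrightarrow> P (t, x)" by (rule AE_completion)
      then show "AE x in lebesgue_on \<Omega>. P (t, x)"
        using sets(3) by (subst AE_restrict_space_iff) auto
    qed
  qed
  then show ?thesis using sets(2) by (rule AE_lebesgue_on_if_AE_lborel)
qed

lemma AE_slice_integrable:
  fixes g :: "real \<times> 'b::euclidean_space \<Rightarrow> real"
  assumes g: "integrable (lebesgue_on (A \<times> \<Omega>)) g"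
    and sets: "A \<times> \<Omega> \<in> sets lebesgue" "\<Omega> \<in> sets lebesgue"
  obtains K where "integrable lborel K"
    "AE t in lborel. t \<in> A \<longrightarrow> integrable (lebesgue_on \<Omega>) (\<lambda>x. g (t, x))
        \<and> K t = integral\<^sup>L (lebesgue_on \<Omega>) (\<lambda>x. g (t, x))"
proof -
  define G where "G z = indicator (A \<times> \<Omega>) z * g z" for z
  have iG: "integrable lebesgue G"
    using g sets unfolding G_def by (subst (asm) integrable_restrict_space) auto
  then have "G \<in> borel_measurable lebesgue" by auto
  then obtain h where h[measurable]: "h \<in> borel_measurable (lborel \<Otimes>\<^sub>M lborel)"
    and Gh: "AE t in lborel. AE x in lborel. G (t, x) = h (t, x)" and Gh': "AE z in lebesgue. G z = h z"
    by (rule lebesgue_pair_borel_representative)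
  have h': "h \<in> borel_measurable (lborel :: (real \<times> 'b) measure)" using h by (simp add: lborel_prod)
  have "integrable lebesgue G \<longleftrightarrow> integrable lebesgue h"
    using iG Gh' h' by (intro integrable_cong_AE) (auto intro: measurable_completion)
  then have "integrable (lborel \<Otimes>\<^sub>M lborel) h"
    using iG integrable_completion[OF h'] by (simp add: lborel_prod)
  then have "integrable lborel (\<lambda>t. \<integral>x. h (t, x) \<partial>lborel)"
    and "AE t in lborel. integrable lborel (\<lambda>x. h (t, x))"
    by (rule lborel_pair.integrable_fst', rule lborel_pair.AE_integrable_fst')
  moreover have "AE t in lborel. t \<in> A \<longrightarrow> integrable (lebesgue_on \<Omega>) (\<lambda>x. g (t, x))
        \<and> (\<integral>x. h (t, x) \<partial>lborel) = integral\<^sup>L (lebesgue_on \<Omega>) (\<lambda>x. g (t, x))"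
    using Gh calculation(2)
  proof eventually_elim
    case (elim t)
    have ht: "(\<lambda>x. h (t, x)) \<in> borel_measurable lborel"
      using measurable_compose[OF measurable_Pair1'[of t lborel lborel] h] by simp
    have Gh_t: "AE x in lebesgue. G (t, x) = h (t, x)" using elim(1) by (rule AE_completion)
    have Gt: "(\<lambda>x. G (t, x)) \<in> borel_measurable lebesgue"
      by (rule borel_measurable_AE[OF measurable_completion[OF ht]]) (use Gh_t in auto)
    have "integrable lebesgue (\<lambda>x. G (t, x)) \<longleftrightarrow> integrable lebesgue (\<lambda>x. h (t, x))"
      using Gt Gh_t ht by (intro integrable_cong_AE) (auto intro: measurable_completion)
    then have iGt: "integrable lebesgue (\<lambda>x. G (t, x))"
      using elim(2) integrable_completion[OF ht] by simp
    have int_Gt: "(\<integral>x. G (t, x) \<partial>lebesgue) = (\<integral>x. h (t, x) \<partial>lborel)"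
      using Gt Gh_t ht integral_completion[OF ht]
      by (subst integral_cong_AE[of _ _ "\<lambda>x. h (t, x)"]) (auto intro: measurable_completion)
    show ?case
    proof
      assume "t \<in> A"
      then have "(\<lambda>x. G (t, x)) = (\<lambda>x. indicator \<Omega> x *\<^sub>R g (t, x))"
        by (auto simp: G_def indicator_def)
      then show "integrable (lebesgue_on \<Omega>) (\<lambda>x. g (t, x))
          \<and> (\<integral>x. h (t, x) \<partial>lborel) = integral\<^sup>L (lebesgue_on \<Omega>) (\<lambda>x. g (t, x))"
        using iGt int_Gt sets(2) by (simp add: integrable_restrict_space integral_restrict_space)
    qed
  qed
  ultimately show ?thesis using that by blast
qed

lemma integrable_slice_integral:
  fixes g :: "real \<times> 'b::euclidean_space \<Rightarrow> real"
  assumes g: "integrable (lebesgue_on (A \<times> \<Omega>)) g"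
    and sets: "A \<times> \<Omega> \<in> sets lebesgue" "A \<in> sets lebesgue" "\<Omega> \<in> sets lebesgue"
  shows "AE t in lebesgue_on A. integrable (lebesgue_on \<Omega>) (\<lambda>x. g (t, x))"
    and "integrable (lebesgue_on A) (\<lambda>t. integral\<^sup>L (lebesgue_on \<Omega>) (\<lambda>x. g (t, x)))"
    (is "integrable _ ?I")
proof -
  obtain K where K: "integrable lborel K"
    and slices: "AE t in lborel. t \<in> A \<longrightarrow> integrable (lebesgue_on \<Omega>) (\<lambda>x. g (t, x))
        \<and> K t = integral\<^sup>L (lebesgue_on \<Omega>) (\<lambda>x. g (t, x))"
    using AE_slice_integrable[OF g sets(1,3)] by blast
  show "AE t in lebesgue_on A. integrable (lebesgue_on \<Omega>) (\<lambda>x. g (t, x))"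
  proof (rule AE_lebesgue_on_if_AE_lborel[OF _ sets(2)])
    show "AE t in lborel. t \<in> A \<longrightarrow> integrable (lebesgue_on \<Omega>) (\<lambda>x. g (t, x))"
      using slices by eventually_elim blast
  qed
  define I where "I t = integral\<^sup>L (lebesgue_on \<Omega>) (\<lambda>x. g (t, x))" for t
  have KI: "AE t in lebesgue. indicator A t * K t = indicator A t * I t"
    using AE_completion[OF slices] by eventually_elim (simp add: I_def indicator_def)
  have [measurable]: "K \<in> borel_measurable lborel" using K by auto
  have "integrable lebesgue K" using K integrable_completion[of K] by simp
  from integrable_mult_indicator[OF sets(2) this]
  have iK: "integrable lebesgue (\<lambda>t. indicator A t * K t)" by simp
  then have "(\<lambda>t. indicator A t * K t) \<in> borel_measurable lebesgue" by (rule borel_measurable_integrable)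
  then have "(\<lambda>t. indicator A t * I t) \<in> borel_measurable lebesgue"
    using KI by (rule borel_measurable_AE)
  from iK this KI have "integrable lebesgue (\<lambda>t. indicator A t * I t)"
    by (rule integrable_cong_AE_imp)
  then show "integrable (lebesgue_on A) ?I"
    using sets(2) by (simp add: integrable_restrict_space I_def)
qed

lemma integrable_lebesgue_on_Icc_if_Ioo:
  fixes f :: "real \<Rightarrow> real"
  assumes f: "integrable (lebesgue_on {a<..<b}) f" and cd: "a \<le> c" "d \<le> b"
  shows "integrable (lebesgue_on {c..d}) f"
proof -
  have "integrable lebesgue (\<lambda>x. indicator {a<..<b} x * f x)"
    using f by (simp add: integrable_restrict_space)
  then have i: "integrable lebesgue (\<lambda>x. indicator {c..d} x * (indicator {a<..<b} x * f x))"
    using integrable_mult_indicator[of "{c..d}" lebesgue "\<lambda>x. indicator {a<..<b} x * f x"] by simp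
  have ae: "AE x in lebesgue. indicator {c..d} x * (indicator {a<..<b} x * f x) = indicator {c..d} x * f x"
    using AE_lebesgue_neq[of a] AE_lebesgue_neq[of b]
    by eventually_elim (use cd in \<open>auto simp: indicator_def\<close>)
  have "(\<lambda>x. indicator {c..d} x * (indicator {a<..<b} x * f x)) \<in> borel_measurable lebesgue"
    using i by auto
  then have "(\<lambda>x. indicator {c..d} x * f x) \<in> borel_measurable lebesgue"
    using ae by (rule borel_measurable_AE)
  from i this ae have "integrable lebesgue (\<lambda>x. indicator {c..d} x * f x)"
    by (rule integrable_cong_AE_imp)
  then show ?thesis by (simp add: integrable_lebesgue_on_Icc)
qed

section \<open>Square integrable fields and the \<open>L\<^sup>2\<close> inner product\<close>

lemma mult_le_young:
  fixes a b e :: real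
  assumes "e > 0"
  shows "a * b \<le> (e * a\<^sup>2 + b\<^sup>2 / e) / 2"
proof -
  have "(e * a\<^sup>2 + b\<^sup>2 / e) / 2 - a * b = (e * a - b)\<^sup>2 / (2 * e)"
    using assms by (simp add: field_simps power2_eq_square)
  moreover have "(e * a - b)\<^sup>2 / (2 * e) \<ge> 0" using assms by simp
  ultimately show ?thesis by linarith
qed

lemma sq_int_measurable: "sq_int \<Omega> u \<Longrightarrow> u \<in> borel_measurable (lebesgue_on \<Omega>)"
  by (simp add: sq_int_def)

lemma sq_int_integrable: "sq_int \<Omega> u \<Longrightarrow> integrable (lebesgue_on \<Omega>) (\<lambda>x. (norm (u x))\<^sup>2)"
  by (simp add: sq_int_def)

lemma sq_int_inner_integrable:
  fixes u w :: "real^'d \<Rightarrow> 'b::euclidean_space"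
  assumes u: "sq_int \<Omega> u" and w: "sq_int \<Omega> w"
  shows "integrable (lebesgue_on \<Omega>) (\<lambda>x. inner (u x) (w x))"
proof (rule Bochner_Integration.integrable_bound[where f="\<lambda>x. (norm (u x))\<^sup>2 + (norm (w x))\<^sup>2"])
  show "integrable (lebesgue_on \<Omega>) (\<lambda>x. (norm (u x))\<^sup>2 + (norm (w x))\<^sup>2)"
    using sq_int_integrable[OF u] sq_int_integrable[OF w] by (rule Bochner_Integration.integrable_add)
  have [measurable]: "u \<in> borel_measurable (lebesgue_on \<Omega>)" "w \<in> borel_measurable (lebesgue_on \<Omega>)"
    using u w by (simp_all add: sq_int_def)
  show "(\<lambda>x. inner (u x) (w x)) \<in> borel_measurable (lebesgue_on \<Omega>)" by measurable
  show "AE x in lebesgue_on \<Omega>. norm (inner (u x) (w x)) \<le> norm ((norm (u x))\<^sup>2 + (norm (w x))\<^sup>2)"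
  proof (rule AE_I2)
    fix x
    have "norm (inner (u x) (w x)) \<le> norm (u x) * norm (w x)" by (simp add: Cauchy_Schwarz_ineq2)
    also have "\<dots> \<le> (1 * (norm (u x))\<^sup>2 + (norm (w x))\<^sup>2 / 1) / 2" by (rule mult_le_young) simp
    finally show "norm (inner (u x) (w x)) \<le> norm ((norm (u x))\<^sup>2 + (norm (w x))\<^sup>2)" by simp
  qed
qed

lemma sq_int_add:
  fixes u w :: "real^'d \<Rightarrow> 'b::euclidean_space"
  assumes u: "sq_int \<Omega> u" and w: "sq_int \<Omega> w"
  shows "sq_int \<Omega> (\<lambda>x. u x + w x)"
  unfolding sq_int_def
proof
  have [measurable]: "u \<in> borel_measurable (lebesgue_on \<Omega>)" "w \<in> borel_measurable (lebesgue_on \<Omega>)"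
    using u w by (simp_all add: sq_int_def)
  show "(\<lambda>x. u x + w x) \<in> borel_measurable (lebesgue_on \<Omega>)" by measurable
  show "integrable (lebesgue_on \<Omega>) (\<lambda>x. (norm (u x + w x))\<^sup>2)"
  proof (rule Bochner_Integration.integrable_bound[where f="\<lambda>x. 2 * (norm (u x))\<^sup>2 + 2 * (norm (w x))\<^sup>2"])
    show "integrable (lebesgue_on \<Omega>) (\<lambda>x. 2 * (norm (u x))\<^sup>2 + 2 * (norm (w x))\<^sup>2)"
      using sq_int_integrable[OF u] sq_int_integrable[OF w]
      by (intro Bochner_Integration.integrable_add integrable_mult_right)
    show "(\<lambda>x. (norm (u x + w x))\<^sup>2) \<in> borel_measurable (lebesgue_on \<Omega>)" by measurable
    show "AE x in lebesgue_on \<Omega>. norm ((norm (u x + w x))\<^sup>2) \<le> norm (2 * (norm (u x))\<^sup>2 + 2 * (norm (w x))\<^sup>2)"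
    proof (rule AE_I2)
      fix x
      have "(norm (u x + w x))\<^sup>2 \<le> (norm (u x) + norm (w x))\<^sup>2"
        by (simp add: power_mono norm_triangle_ineq)
      also have "\<dots> \<le> 2 * (norm (u x))\<^sup>2 + 2 * (norm (w x))\<^sup>2"
        using mult_le_young[of 1 "norm (u x)" "norm (w x)"] by (simp add: power2_eq_square algebra_simps)
      finally show "norm ((norm (u x + w x))\<^sup>2) \<le> norm (2 * (norm (u x))\<^sup>2 + 2 * (norm (w x))\<^sup>2)"
        by simp
    qed
  qed
qed

lemma sq_int_scaleR:
  fixes u :: "real^'d \<Rightarrow> 'b::euclidean_space"
  assumes u: "sq_int \<Omega> u"
  shows "sq_int \<Omega> (\<lambda>x. c *\<^sub>R u x)"
  unfolding sq_int_def
proof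
  have [measurable]: "u \<in> borel_measurable (lebesgue_on \<Omega>)" using u by (simp add: sq_int_def)
  show "(\<lambda>x. c *\<^sub>R u x) \<in> borel_measurable (lebesgue_on \<Omega>)" by measurable
  have "integrable (lebesgue_on \<Omega>) (\<lambda>x. c\<^sup>2 * (norm (u x))\<^sup>2)"
    using sq_int_integrable[OF u] by (rule integrable_mult_right)
  then show "integrable (lebesgue_on \<Omega>) (\<lambda>x. (norm (c *\<^sub>R u x))\<^sup>2)"
    by (simp add: power_mult_distrib)
qed

lemma sq_int_sum:
  fixes f :: "nat \<Rightarrow> real^'d \<Rightarrow> 'b::euclidean_space"
  assumes "finite I" "\<And>i. i \<in> I \<Longrightarrow> sq_int \<Omega> (f i)"
  shows "sq_int \<Omega> (\<lambda>x. \<Sum>i\<in>I. f i x)"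
  using assms
proof (induction I rule: finite_induct)
  case empty
  then show ?case by (simp add: sq_int_def)
next
  case (insert i I)
  then show ?case using sq_int_add[of \<Omega> "f i" "\<lambda>x. \<Sum>i\<in>I. f i x"] by simp
qed

lemma sq_int_lin_comb:
  fixes B :: "(real^'d \<Rightarrow> 'b::euclidean_space) list"
  assumes "\<forall>q\<in>set B. sq_int \<Omega> q"
  shows "sq_int \<Omega> (lin_comb B c)"
  unfolding lin_comb_def using assms by (intro sq_int_sum sq_int_scaleR) auto

lemma sq_int_fspan:
  fixes B :: "(real^'d \<Rightarrow> 'b::euclidean_space) list"
  assumes "\<forall>q\<in>set B. sq_int \<Omega> q" "w \<in> fspan B"
  shows "sq_int \<Omega> w"
  using assms sq_int_lin_comb unfolding fspan_def by blast

lemma l2ip_commute: "l2ip \<Omega> u w = l2ip \<Omega> w u"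
  unfolding l2ip_def by (simp add: inner_commute)

lemma l2ip_self_eq: "l2ip \<Omega> u u = integral\<^sup>L (lebesgue_on \<Omega>) (\<lambda>x. (norm (u x))\<^sup>2)"
  unfolding l2ip_def by (simp add: power2_norm_eq_inner)

lemma l2ip_self_nonneg: "0 \<le> l2ip \<Omega> u u"
  unfolding l2ip_self_eq by (rule Bochner_Integration.integral_nonneg) simp

lemma l2ip_add_left:
  fixes u v w :: "real^'d \<Rightarrow> 'b::euclidean_space"
  assumes "sq_int \<Omega> u" "sq_int \<Omega> v" "sq_int \<Omega> w"
  shows "l2ip \<Omega> (\<lambda>x. a *\<^sub>R u x + b *\<^sub>R v x) w = a * l2ip \<Omega> u w + b * l2ip \<Omega> v w"
  using sq_int_inner_integrable[OF assms(1,3)] sq_int_inner_integrable[OF assms(2,3)]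
  by (simp add: l2ip_def inner_add_left)

lemma l2ip_lin_comb_left:
  fixes B :: "(real^'d \<Rightarrow> 'b::euclidean_space) list"
  assumes B: "\<forall>q\<in>set B. sq_int \<Omega> q" and w: "sq_int \<Omega> w"
  shows "l2ip \<Omega> (lin_comb B c) w = (\<Sum>i<length B. c i * l2ip \<Omega> (B ! i) w)"
proof -
  have "l2ip \<Omega> (lin_comb B c) w
      = integral\<^sup>L (lebesgue_on \<Omega>) (\<lambda>x. \<Sum>i<length B. c i * inner ((B ! i) x) (w x))"
    unfolding l2ip_def lin_comb_def by (simp add: inner_sum_left)
  also have "\<dots> = (\<Sum>i<length B. c i * l2ip \<Omega> (B ! i) w)"
    using B w unfolding l2ip_def
    by (subst Bochner_Integration.integral_sum) (auto intro: sq_int_inner_integrable)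
  finally show ?thesis .
qed

lemma abs_l2ip_le_young:
  fixes u w :: "real^'d \<Rightarrow> 'b::euclidean_space"
  assumes u: "sq_int \<Omega> u" and w: "sq_int \<Omega> w" and e: "e > 0"
  shows "\<bar>l2ip \<Omega> u w\<bar> \<le> (e * l2ip \<Omega> u u + l2ip \<Omega> w w / e) / 2"
proof -
  have "\<bar>l2ip \<Omega> u w\<bar> \<le> integral\<^sup>L (lebesgue_on \<Omega>) (\<lambda>x. \<bar>inner (u x) (w x)\<bar>)"
    unfolding l2ip_def using integral_norm_bound[of "lebesgue_on \<Omega>" "\<lambda>x. inner (u x) (w x)"]
    by (simp only: real_norm_def)
  also have "\<dots> \<le> integral\<^sup>L (lebesgue_on \<Omega>) (\<lambda>x. (e * (norm (u x))\<^sup>2 + (norm (w x))\<^sup>2 / e) / 2)"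
  proof (rule integral_mono)
    show "integrable (lebesgue_on \<Omega>) (\<lambda>x. \<bar>inner (u x) (w x)\<bar>)"
      using sq_int_inner_integrable[OF u w] by simp
    show "integrable (lebesgue_on \<Omega>) (\<lambda>x. (e * (norm (u x))\<^sup>2 + (norm (w x))\<^sup>2 / e) / 2)"
      using sq_int_integrable[OF u] sq_int_integrable[OF w] by simp
    fix x
    have "\<bar>inner (u x) (w x)\<bar> \<le> norm (u x) * norm (w x)" by (simp add: Cauchy_Schwarz_ineq2)
    also have "\<dots> \<le> (e * (norm (u x))\<^sup>2 + (norm (w x))\<^sup>2 / e) / 2" by (rule mult_le_young[OF e])
    finally show "\<bar>inner (u x) (w x)\<bar> \<le> (e * (norm (u x))\<^sup>2 + (norm (w x))\<^sup>2 / e) / 2" .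
  qed
  also have "\<dots> = (e * l2ip \<Omega> u u + l2ip \<Omega> w w / e) / 2"
    using sq_int_integrable[OF u] sq_int_integrable[OF w] by (simp add: l2ip_self_eq)
  finally show ?thesis .
qed

lemma two_l2ip_le:
  fixes u w :: "real^'d \<Rightarrow> 'b::euclidean_space"
  assumes "sq_int \<Omega> u" "sq_int \<Omega> w"
  shows "2 * l2ip \<Omega> u w \<le> l2ip \<Omega> u u + l2ip \<Omega> w w"
  using abs_l2ip_le_young[OF assms, of 1] by simp

section \<open>Curves in finite-dimensional spans\<close>

definition span_primitive_on ::
    "('a \<Rightarrow> 'b::real_vector) list \<Rightarrow> real \<Rightarrow> (real \<Rightarrow> 'a \<Rightarrow> 'b) \<Rightarrow> (real \<Rightarrow> 'a \<Rightarrow> 'b) \<Rightarrow> bool" where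
  "span_primitive_on B T u u' \<longleftrightarrow> (\<exists>a a'. (\<forall>i<length B. primitive_on T (a i) (a' i))
     \<and> (\<forall>t\<in>{0..T}. u t = lin_comb B (\<lambda>i. a i t) \<and> u' t = lin_comb B (\<lambda>i. a' i t)))"

lemma H2_scalar_primitive_on:
  assumes H: "H2_scalar T a a1 a2" and T: "0 \<le> T"
  shows "primitive_on T a1 a2" "primitive_on T a a1"
proof -
  have "finite_measure (lebesgue_on {0..T})"
    by (rule finite_measure_lebesgue_on) simp
  moreover have "a2 \<in> borel_measurable (lebesgue_on {0..T})"
    and "integrable (lebesgue_on {0..T}) (\<lambda>t. (a2 t)\<^sup>2)"
    using H unfolding H2_scalar_def by blast+
  ultimately have "integrable (lebesgue_on {0..T}) a2"
    by (rule finite_measure.square_integrable_imp_integrable)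
  then show a1: "primitive_on T a1 a2"
    using H unfolding H2_scalar_def primitive_on_def by blast
  then have "integrable (lebesgue_on {0..T}) a1"
    by (intro continuous_imp_integrable_real primitive_on_continuous)
  then show "primitive_on T a a1"
    using H unfolding H2_scalar_def primitive_on_def by blast
qed

lemma H2_time_span_primitive_on:
  assumes "H2_time B T u u1 u2" "0 \<le> T"
  shows "span_primitive_on B T u u1" "span_primitive_on B T u1 u2"
proof -
  obtain a a1 a2 where a: "\<forall>i<length B. H2_scalar T (a i) (a1 i) (a2 i)"
    and u: "\<forall>t\<in>{0..T}. u t = lin_comb B (\<lambda>i. a i t) \<and> u1 t = lin_comb B (\<lambda>i. a1 i t)
      \<and> u2 t = lin_comb B (\<lambda>i. a2 i t)"
    using assms(1) unfolding H2_time_def by blast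
  show "span_primitive_on B T u u1" "span_primitive_on B T u1 u2"
    unfolding span_primitive_on_def using a u H2_scalar_primitive_on[OF _ assms(2)] by blast+
qed

lemma span_primitive_on_fspan:
  assumes "span_primitive_on B T u u'" "t \<in> {0..T}"
  shows "u t \<in> fspan B" "u' t \<in> fspan B"
  using assms unfolding span_primitive_on_def fspan_def by blast+

lemma primitive_on_l2ip_const:
  fixes B :: "(real^'d \<Rightarrow> 'b::euclidean_space) list"
  assumes u: "span_primitive_on B T u u'" and B: "\<forall>q\<in>set B. sq_int \<Omega> q"
    and w: "sq_int \<Omega> w" and T: "0 \<le> T"
  shows "primitive_on T (\<lambda>t. l2ip \<Omega> (u t) w) (\<lambda>t. l2ip \<Omega> (u' t) w)"
proof -
  obtain a a' where a: "\<And>i. i < length B \<Longrightarrow> primitive_on T (a i) (a' i)"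
    and ua: "\<And>t. t \<in> {0..T} \<Longrightarrow> u t = lin_comb B (\<lambda>i. a i t) \<and> u' t = lin_comb B (\<lambda>i. a' i t)"
    using u unfolding span_primitive_on_def by blast
  have "primitive_on T (\<lambda>t. \<Sum>i<length B. a i t * l2ip \<Omega> (B ! i) w)
      (\<lambda>t. \<Sum>i<length B. a' i t * l2ip \<Omega> (B ! i) w)"
    using a primitive_on_cmult[of T "a _" "a' _" "l2ip \<Omega> (B ! _) w"]
    by (intro primitive_on_sum) (simp_all add: mult.commute)
  then show ?thesis
    by (rule primitive_on_cong[OF _ T]) (simp_all add: ua l2ip_lin_comb_left[OF B w])
qed

text \<open>Product rule for the inner product of two curves in the same span: expand the second curve
  in the spanning list and apply the scalar product rule termwise.\<close>

lemma primitive_on_l2ip: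
  fixes B :: "(real^'d \<Rightarrow> 'b::euclidean_space) list"
  assumes u: "span_primitive_on B T u u'" and w: "span_primitive_on B T w w'"
    and B: "\<forall>q\<in>set B. sq_int \<Omega> q" and T: "0 \<le> T"
  shows "primitive_on T (\<lambda>t. l2ip \<Omega> (u t) (w t)) (\<lambda>t. l2ip \<Omega> (u' t) (w t) + l2ip \<Omega> (u t) (w' t))"
proof -
  obtain b b' where b: "\<And>j. j < length B \<Longrightarrow> primitive_on T (b j) (b' j)"
    and wb: "\<And>t. t \<in> {0..T} \<Longrightarrow> w t = lin_comb B (\<lambda>j. b j t) \<and> w' t = lin_comb B (\<lambda>j. b' j t)"
    using w unfolding span_primitive_on_def by blast
  have sq: "sq_int \<Omega> (u t)" "sq_int \<Omega> (u' t)" if "t \<in> {0..T}" for t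
    using sq_int_fspan[OF B] span_primitive_on_fspan[OF u that] by blast+
  have expand: "l2ip \<Omega> v (lin_comb B c) = (\<Sum>j<length B. c j * l2ip \<Omega> v (B ! j))"
    if "sq_int \<Omega> v" for v c
    using l2ip_lin_comb_left[OF B that, of c] by (simp add: l2ip_commute)
  have "primitive_on T (\<lambda>t. l2ip \<Omega> (u t) (B ! j) * b j t)
      (\<lambda>t. l2ip \<Omega> (u' t) (B ! j) * b j t + l2ip \<Omega> (u t) (B ! j) * b' j t)" if "j < length B" for j
    using B that by (intro primitive_on_mult primitive_on_l2ip_const[OF u B _ T] b) simp_all
  then have "primitive_on T (\<lambda>t. \<Sum>j<length B. l2ip \<Omega> (u t) (B ! j) * b j t)
      (\<lambda>t. \<Sum>j<length B. l2ip \<Omega> (u' t) (B ! j) * b j t + l2ip \<Omega> (u t) (B ! j) * b' j t)"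
    by (intro primitive_on_sum) simp_all
  then show ?thesis
  proof (rule primitive_on_cong[OF _ T])
    fix t assume "t \<in> {0..T}"
    then show "(\<Sum>j<length B. l2ip \<Omega> (u t) (B ! j) * b j t) = l2ip \<Omega> (u t) (w t)"
      and "(\<Sum>j<length B. l2ip \<Omega> (u' t) (B ! j) * b j t + l2ip \<Omega> (u t) (B ! j) * b' j t)
        = l2ip \<Omega> (u' t) (w t) + l2ip \<Omega> (u t) (w' t)"
      using wb sq by (simp_all add: expand sum.distrib mult.commute)
  qed
qed

lemma primitive_on_l2ip_self:
  fixes B :: "(real^'d \<Rightarrow> 'b::euclidean_space) list"
  assumes u: "span_primitive_on B T u u'" and B: "\<forall>q\<in>set B. sq_int \<Omega> q" and T: "0 \<le> T"
  shows "primitive_on T (\<lambda>t. l2ip \<Omega> (u t) (u t)) (\<lambda>t. 2 * l2ip \<Omega> (u t) (u' t))"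
  using primitive_on_l2ip[OF u u B T] by (simp add: l2ip_commute[of \<Omega> "u' _"])

lemma integrable_mult_if_square_integrable:
  fixes f g :: "'a \<Rightarrow> real"
  assumes "f \<in> borel_measurable M" "g \<in> borel_measurable M"
    "integrable M (\<lambda>s. (f s)\<^sup>2)" "integrable M (\<lambda>s. (g s)\<^sup>2)"
  shows "integrable M (\<lambda>s. f s * g s)"
proof (rule Bochner_Integration.integrable_bound[where f="\<lambda>s. (f s)\<^sup>2 + (g s)\<^sup>2"])
  show "integrable M (\<lambda>s. (f s)\<^sup>2 + (g s)\<^sup>2)"
    using assms(3,4) by (rule Bochner_Integration.integrable_add)
  show "(\<lambda>s. f s * g s) \<in> borel_measurable M" using assms(1,2) by measurable
  show "AE x in M. norm (f x * g x) \<le> norm ((f x)\<^sup>2 + (g x)\<^sup>2)"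
  proof (rule AE_I2)
    fix x
    have "2 * \<bar>f x * g x\<bar> \<le> (f x)\<^sup>2 + (g x)\<^sup>2"
      using sum_squares_bound[of "\<bar>f x\<bar>" "\<bar>g x\<bar>"] by (simp add: abs_mult)
    then have "\<bar>f x * g x\<bar> \<le> (f x)\<^sup>2 + (g x)\<^sup>2" using abs_ge_zero[of "f x * g x"] by linarith
    then show "norm (f x * g x) \<le> norm ((f x)\<^sup>2 + (g x)\<^sup>2)" by simp
  qed
qed

lemma H2_time_integrable_l2ip_second:
  fixes B :: "(real^'d \<Rightarrow> 'b::euclidean_space) list"
  assumes H: "H2_time B T u u1 u2" and B: "\<forall>q\<in>set B. sq_int \<Omega> q"
  shows "integrable (lebesgue_on {0..T}) (\<lambda>t. l2ip \<Omega> (u2 t) (u2 t))"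
proof -
  obtain a a1 a2 where a: "\<forall>i<length B. H2_scalar T (a i) (a1 i) (a2 i)"
    and u: "\<forall>t\<in>{0..T}. u t = lin_comb B (\<lambda>i. a i t) \<and> u1 t = lin_comb B (\<lambda>i. a1 i t)
      \<and> u2 t = lin_comb B (\<lambda>i. a2 i t)"
    using H unfolding H2_time_def by blast
  have "l2ip \<Omega> (B ! i) (lin_comb B c) = (\<Sum>j<length B. c j * l2ip \<Omega> (B ! j) (B ! i))"
    if "i < length B" for i c
  proof -
    have "sq_int \<Omega> (B ! i)" using B that by simp
    then show ?thesis by (subst l2ip_commute) (rule l2ip_lin_comb_left[OF B])
  qed
  then have "l2ip \<Omega> (lin_comb B c) (lin_comb B c)
      = (\<Sum>i<length B. \<Sum>j<length B. c i * c j * l2ip \<Omega> (B ! j) (B ! i))" for c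
    unfolding l2ip_lin_comb_left[OF B sq_int_lin_comb[OF B]] by (simp add: sum_distrib_left mult.assoc)
  then have expand: "l2ip \<Omega> (u2 t) (u2 t)
      = (\<Sum>i<length B. \<Sum>j<length B. a2 i t * a2 j t * l2ip \<Omega> (B ! j) (B ! i))" if "t \<in> {0..T}" for t
    using u that by simp
  have L2: "a2 i \<in> borel_measurable (lebesgue_on {0..T})" "integrable (lebesgue_on {0..T}) (\<lambda>t. (a2 i t)\<^sup>2)"
    if "i < length B" for i
    using a that unfolding H2_scalar_def by blast+
  have "integrable (lebesgue_on {0..T}) (\<lambda>t. a2 i t * a2 j t)" if "i < length B" "j < length B" for i j
    using L2(1)[OF that(1)] L2(1)[OF that(2)] L2(2)[OF that(1)] L2(2)[OF that(2)]
    by (rule integrable_mult_if_square_integrable)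
  then have "integrable (lebesgue_on {0..T})
      (\<lambda>t. \<Sum>i<length B. \<Sum>j<length B. a2 i t * a2 j t * l2ip \<Omega> (B ! j) (B ! i))"
    by (intro Bochner_Integration.integrable_sum integrable_mult_left) simp
  moreover have "integrable (lebesgue_on {0..T}) (\<lambda>t. l2ip \<Omega> (u2 t) (u2 t))
      = integrable (lebesgue_on {0..T})
          (\<lambda>t. \<Sum>i<length B. \<Sum>j<length B. a2 i t * a2 j t * l2ip \<Omega> (B ! j) (B ! i))"
    by (rule Bochner_Integration.integrable_cong) (simp_all add: expand)
  ultimately show ?thesis by simp
qed

section \<open>Almost everywhere in time, for all test functions at once\<close>

lemma AE_all_separable:
  fixes \<Lambda> :: "'t \<Rightarrow> 'v::{metric_space, second_countable_topology} \<Rightarrow> real"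
  assumes cont: "\<And>t. continuous_on UNIV (\<Lambda> t)"
    and each: "\<And>w. w \<in> V \<Longrightarrow> AE t in M. \<Lambda> t w = 0"
  shows "AE t in M. \<forall>w\<in>V. \<Lambda> t w = 0"
proof -
  obtain D where D: "countable D" "D \<subseteq> V" "V \<subseteq> closure D" by (rule separable)
  have "AE t in M. \<forall>d\<in>D. \<Lambda> t d = 0"
    using D(1) by (rule AE_ball_countable[THEN iffD2]) (use D(2) each in blast)
  then show ?thesis
  proof eventually_elim
    case (elim t)
    have "closed {w. \<Lambda> t w = 0}"
      using continuous_closed_preimage_constant[OF cont[of t] closed_UNIV, of 0] by simp
    then have "closure D \<subseteq> {w. \<Lambda> t w = 0}" using elim by (intro closure_minimal) auto
    then show ?case using D(3) by auto
  qed
qed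

text \<open>A pairing with curves in finite-dimensional spans only sees finitely many coordinates of the
  test function, so the separability argument above applies.\<close>

lemma AE_all_fspan_pairing_zero:
  fixes W :: "(real^'d \<Rightarrow> 'b::euclidean_space) list" and B :: "(real^'d \<Rightarrow> 'c::euclidean_space) list"
  assumes W: "\<forall>q\<in>set W. sq_int \<Omega> q" and B: "\<forall>q\<in>set B. sq_int \<Omega> q"
    and x: "\<And>s. s \<in> S \<Longrightarrow> x s \<in> fspan W" and y: "\<And>s. s \<in> S \<Longrightarrow> y s \<in> fspan B"
    and V: "\<And>w. w \<in> V \<Longrightarrow> sq_int \<Omega> w \<and> sq_int \<Omega> (D w)"
    and each: "\<And>w. w \<in> V \<Longrightarrow> AE s in lebesgue_on S. l2ip \<Omega> (x s) w + l2ip \<Omega> (y s) (D w) = 0"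
  shows "AE s in lebesgue_on S. \<forall>w\<in>V. l2ip \<Omega> (x s) w + l2ip \<Omega> (y s) (D w) = 0"
proof -
  define cx where "cx s = (SOME c. x s = lin_comb W c)" for s
  define cy where "cy s = (SOME c. y s = lin_comb B c)" for s
  have xy: "x s = lin_comb W (cx s)" "y s = lin_comb B (cy s)" if "s \<in> S" for s
  proof -
    have "\<exists>c. x s = lin_comb W c" using x[OF that] unfolding fspan_def by blast
    then show "x s = lin_comb W (cx s)" unfolding cx_def by (rule someI_ex)
    have "\<exists>c. y s = lin_comb B c" using y[OF that] unfolding fspan_def by blast
    then show "y s = lin_comb B (cy s)" unfolding cy_def by (rule someI_ex)
  qed
  define L where "L w = ((\<lambda>j. l2ip \<Omega> (W ! j) w), (\<lambda>i. l2ip \<Omega> (B ! i) (D w)))" for w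
  define \<Lambda> where "\<Lambda> s z = (\<Sum>j<length W. cx s j * fst z j) + (\<Sum>i<length B. cy s i * snd z i)"
    for s and z :: "(nat \<Rightarrow> real) \<times> (nat \<Rightarrow> real)"
  have pairing: "l2ip \<Omega> (x s) w + l2ip \<Omega> (y s) (D w) = \<Lambda> s (L w)" if "s \<in> S" "w \<in> V" for s w
  proof -
    have w: "sq_int \<Omega> w" and Dw: "sq_int \<Omega> (D w)" using V[OF that(2)] by blast+
    show ?thesis
      unfolding xy[OF that(1)] \<Lambda>_def L_def l2ip_lin_comb_left[OF W w] l2ip_lin_comb_left[OF B Dw]
      by simp
  qed
  have "continuous_on UNIV (\<Lambda> s)" for s
    unfolding \<Lambda>_def by (intro continuous_intros continuous_on_product_then_coordinatewise)
  moreover have "AE s in lebesgue_on S. \<Lambda> s z = 0" if "z \<in> L ` V" for z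
  proof -
    obtain w where w: "w \<in> V" "z = L w" using \<open>z \<in> L ` V\<close> by blast
    show ?thesis using each[OF w(1)] by (rule lebesgue_on_mono) (simp add: pairing w)
  qed
  ultimately have "AE s in lebesgue_on S. \<forall>z\<in>L ` V. \<Lambda> s z = 0"
    by (rule AE_all_separable)
  then show ?thesis by (rule lebesgue_on_mono) (simp add: pairing)
qed

section \<open>The energy identity at a fixed time\<close>

lemma l2ip_weighted_lower_bound:
  fixes P \<rho> :: "real^'d \<Rightarrow> real"
  assumes P: "sq_int \<Omega> P" and \<rho>_meas: "\<rho> \<in> borel_measurable (lebesgue_on \<Omega>)"
    and \<rho>: "\<And>x. x \<in> \<Omega> \<Longrightarrow> \<kappa> \<le> \<rho> x \<and> \<rho> x \<le> R"
  shows "\<kappa> * l2ip \<Omega> P P \<le> l2ip \<Omega> (\<lambda>x. \<rho> x * P x) P"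
proof -
  have iP: "integrable (lebesgue_on \<Omega>) (\<lambda>x. (norm (P x))\<^sup>2)" by (rule sq_int_integrable[OF P])
  have [measurable]: "P \<in> borel_measurable (lebesgue_on \<Omega>)" by (rule sq_int_measurable[OF P])
  have "integrable (lebesgue_on \<Omega>) (\<lambda>x. \<rho> x * (norm (P x))\<^sup>2)"
  proof (rule Bochner_Integration.integrable_bound[where f="\<lambda>x. (\<bar>\<kappa>\<bar> + \<bar>R\<bar>) * (norm (P x))\<^sup>2"])
    show "integrable (lebesgue_on \<Omega>) (\<lambda>x. (\<bar>\<kappa>\<bar> + \<bar>R\<bar>) * (norm (P x))\<^sup>2)" using iP by simp
    show "(\<lambda>x. \<rho> x * (norm (P x))\<^sup>2) \<in> borel_measurable (lebesgue_on \<Omega>)" using \<rho>_meas by measurable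
    show "AE x in lebesgue_on \<Omega>. norm (\<rho> x * (norm (P x))\<^sup>2) \<le> norm ((\<bar>\<kappa>\<bar> + \<bar>R\<bar>) * (norm (P x))\<^sup>2)"
    proof (rule AE_I2)
      fix x assume "x \<in> space (lebesgue_on \<Omega>)"
      then have "\<bar>\<rho> x\<bar> \<le> \<bar>\<kappa>\<bar> + \<bar>R\<bar>" using \<rho>[of x] by auto
      then show "norm (\<rho> x * (norm (P x))\<^sup>2) \<le> norm ((\<bar>\<kappa>\<bar> + \<bar>R\<bar>) * (norm (P x))\<^sup>2)"
        by (simp add: abs_mult mult_right_mono)
    qed
  qed
  then have "integral\<^sup>L (lebesgue_on \<Omega>) (\<lambda>x. \<kappa> * (norm (P x))\<^sup>2)
      \<le> integral\<^sup>L (lebesgue_on \<Omega>) (\<lambda>x. \<rho> x * (norm (P x))\<^sup>2)"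
    using iP \<rho> by (intro integral_mono) (auto intro: mult_right_mono)
  then show ?thesis by (simp add: l2ip_self_eq l2ip_def power2_eq_square mult.assoc)
qed

lemma abs_l2ip_inner_le_young:
  fixes P :: "real^'d \<Rightarrow> real" and V \<beta> :: "real^'d \<Rightarrow> real^'d"
  assumes P: "sq_int \<Omega> P" and V: "sq_int \<Omega> V"
    and \<beta>: "AE x in lebesgue_on \<Omega>. norm (\<beta> x) \<le> \<beta>up" and e: "e > 0"
  shows "\<bar>s * l2ip \<Omega> (\<lambda>x. inner (\<beta> x) (V x)) P\<bar>
    \<le> (e * l2ip \<Omega> P P + (s * \<beta>up)\<^sup>2 * l2ip \<Omega> V V / e) / 2"
proof -
  define bound where "bound x = (e * (norm (P x))\<^sup>2 + (s * \<beta>up)\<^sup>2 * (norm (V x))\<^sup>2 / e) / 2" for x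
  have "\<bar>s * l2ip \<Omega> (\<lambda>x. inner (\<beta> x) (V x)) P\<bar>
      \<le> integral\<^sup>L (lebesgue_on \<Omega>) (\<lambda>x. \<bar>s * (inner (\<beta> x) (V x) * P x)\<bar>)"
    using integral_norm_bound[of "lebesgue_on \<Omega>" "\<lambda>x. s * (inner (\<beta> x) (V x) * P x)"]
    by (simp add: l2ip_def)
  also have "\<dots> \<le> integral\<^sup>L (lebesgue_on \<Omega>) bound"
  proof (rule integral_mono_AE')
    show "integrable (lebesgue_on \<Omega>) bound"
      unfolding bound_def using sq_int_integrable[OF P] sq_int_integrable[OF V] by simp
    show "AE x in lebesgue_on \<Omega>. 0 \<le> bound x" using e by (simp add: bound_def)
    show "AE x in lebesgue_on \<Omega>. \<bar>s * (inner (\<beta> x) (V x) * P x)\<bar> \<le> bound x"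
      using \<beta>
    proof eventually_elim
      case (elim x)
      have "\<bar>inner (\<beta> x) (V x)\<bar> \<le> \<beta>up * norm (V x)"
        using Cauchy_Schwarz_ineq2[of "\<beta> x" "V x"] elim by (metis mult_right_mono norm_ge_zero order.trans)
      from mult_left_mono[OF this, of "\<bar>s\<bar> * \<bar>P x\<bar>"]
      have "\<bar>s * (inner (\<beta> x) (V x) * P x)\<bar> \<le> \<bar>P x\<bar> * (\<bar>s\<bar> * \<beta>up * norm (V x))"
        by (simp add: abs_mult mult_ac)
      also have "\<dots> \<le> bound x"
        using mult_le_young[OF e, of "\<bar>P x\<bar>" "\<bar>s\<bar> * \<beta>up * norm (V x)"]
        by (simp add: bound_def power_mult_distrib)
      finally show ?case .
    qed
  qed
  also have "\<dots> = (e * l2ip \<Omega> P P + (s * \<beta>up)\<^sup>2 * l2ip \<Omega> V V / e) / 2"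
    unfolding bound_def using sq_int_integrable[OF P] sq_int_integrable[OF V] by (simp add: l2ip_self_eq)
  finally show ?thesis .
qed

text \<open>Testing the first equation of (LK) with \<open>\<psi>\<^sub>h\<^sub>t\<^sub>t\<close> and using the time derivative of the
  second one to rewrite the divergence terms.\<close>

lemma LK_tested_with_acceleration:
  fixes \<Omega> :: "(real^'d) set" and B :: "(real^'d \<Rightarrow> real) list" and W :: "(real^'d \<Rightarrow> real^'d) list"
    and P \<rho> F :: "real^'d \<Rightarrow> real" and V Vt Vtt \<beta> :: "real^'d \<Rightarrow> real^'d"
  assumes \<kappa>: "\<kappa> > 0"
    and \<rho>: "\<And>x. x \<in> \<Omega> \<Longrightarrow> \<kappa> \<le> \<rho> x \<and> \<rho> x \<le> R" "\<rho> \<in> borel_measurable (lebesgue_on \<Omega>)"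
    and \<beta>: "AE x in lebesgue_on \<Omega>. norm (\<beta> x) \<le> \<beta>up"
    and sq: "sq_int \<Omega> F" "sq_int \<Omega> P" "sq_int \<Omega> Vt" "sq_int \<Omega> (wdiv \<Omega> V)" "sq_int \<Omega> (wdiv \<Omega> Vt)"
    and mem: "P \<in> fspan B" "V \<in> fspan W" "Vt \<in> fspan W"
    and eq1: "\<forall>\<phi>\<in>fspan B. l2ip \<Omega> (\<lambda>x. \<rho> x * P x) \<phi>
      - l2ip \<Omega> (\<lambda>x. c\<^sup>2 * wdiv \<Omega> V x + b * wdiv \<Omega> Vt x) \<phi>
      + 2 * \<sigma> * l2ip \<Omega> (\<lambda>x. inner (\<beta> x) (Vt x)) \<phi> = l2ip \<Omega> F \<phi>"
    and eq2: "\<forall>w\<in>fspan W. l2ip \<Omega> Vtt w + l2ip \<Omega> P (wdiv \<Omega> w) = 0"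
  shows "\<kappa> * l2ip \<Omega> P P + c\<^sup>2 * l2ip \<Omega> Vtt V + b * l2ip \<Omega> Vtt Vt
    \<le> \<kappa> / 2 * l2ip \<Omega> P P + 4 * \<sigma>\<^sup>2 * \<beta>up\<^sup>2 / \<kappa> * l2ip \<Omega> Vt Vt + l2ip \<Omega> F F / \<kappa>"
proof -
  have tested: "l2ip \<Omega> (\<lambda>x. \<rho> x * P x) P + c\<^sup>2 * l2ip \<Omega> Vtt V + b * l2ip \<Omega> Vtt Vt
      + 2 * \<sigma> * l2ip \<Omega> (\<lambda>x. inner (\<beta> x) (Vt x)) P = l2ip \<Omega> F P"
  proof -
    have "l2ip \<Omega> (\<lambda>x. c\<^sup>2 * wdiv \<Omega> V x + b * wdiv \<Omega> Vt x) P
        = c\<^sup>2 * l2ip \<Omega> (wdiv \<Omega> V) P + b * l2ip \<Omega> (wdiv \<Omega> Vt) P"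
      using l2ip_add_left[OF sq(4,5,2), of "c\<^sup>2" b] by simp
    moreover have "l2ip \<Omega> (wdiv \<Omega> V) P = - l2ip \<Omega> Vtt V" "l2ip \<Omega> (wdiv \<Omega> Vt) P = - l2ip \<Omega> Vtt Vt"
      using eq2 mem(2,3) by (auto simp: l2ip_commute[of \<Omega> "wdiv \<Omega> _"] eq_neg_iff_add_eq_0 add.commute)
    ultimately show ?thesis using eq1 mem(1) by auto
  qed
  have "\<kappa> * l2ip \<Omega> P P \<le> l2ip \<Omega> (\<lambda>x. \<rho> x * P x) P"
    by (rule l2ip_weighted_lower_bound[OF sq(2) \<rho>(2) \<rho>(1)])
  moreover have "\<bar>2 * \<sigma> * l2ip \<Omega> (\<lambda>x. inner (\<beta> x) (Vt x)) P\<bar>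
      \<le> \<kappa> / 4 * l2ip \<Omega> P P + 4 * \<sigma>\<^sup>2 * \<beta>up\<^sup>2 / \<kappa> * l2ip \<Omega> Vt Vt"
    using abs_l2ip_inner_le_young[OF sq(2,3) \<beta>, of "\<kappa> / 2" "2 * \<sigma>"] \<kappa>
    by (simp add: power_mult_distrib field_simps)
  moreover have "\<bar>l2ip \<Omega> F P\<bar> \<le> l2ip \<Omega> F F / \<kappa> + \<kappa> / 4 * l2ip \<Omega> P P"
    using abs_l2ip_le_young[OF sq(1,2), of "2 / \<kappa>"] \<kappa> by (simp add: field_simps)
  ultimately show ?thesis using tested by linarith
qed

section \<open>The energy estimate\<close>

definition LK_rate :: "real \<Rightarrow> real \<Rightarrow> real \<Rightarrow> real \<Rightarrow> real \<Rightarrow> real" where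
  "LK_rate b c \<kappa> \<sigma> \<beta>up =
    (let K = b / 2 + c\<^sup>2 / 2 + c ^ 4 / b + 4 * \<sigma>\<^sup>2 * \<beta>up\<^sup>2 / \<kappa> + c\<^sup>2 + 1 / \<kappa>
     in 3 + 4 * K / \<kappa> + 4 * K / b)"

lemma LK_rate_pos:
  assumes "b > 0" "\<kappa> > 0"
  shows "LK_rate b c \<kappa> \<sigma> \<beta>up > 0"
proof -
  have "0 \<le> c ^ 4" by (simp add: zero_le_even_power)
  then have "0 < b / 2 + c\<^sup>2 / 2 + c ^ 4 / b + 4 * \<sigma>\<^sup>2 * \<beta>up\<^sup>2 / \<kappa> + c\<^sup>2 + 1 / \<kappa>"
    using assms by (intro add_nonneg_pos add_nonneg_nonneg) auto
  then show ?thesis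
    unfolding LK_rate_def Let_def using assms by (intro add_pos_pos add_nonneg_pos) auto
qed

text \<open>The primed quantities are the values at time \<open>0\<close>, \<open>I\<close> is the time integral of the energy
  and \<open>J\<close> that of \<open>M1\<close>; the mixed term \<open>M01\<close> is absorbed by Young's inequality.\<close>

lemma LK_energy_algebra:
  fixes N0 N1 Z M0 M1 M01 N0' N1' M0' M1' M01' I J F :: real
  assumes pos: "b > 0" "\<kappa> > 0"
    and nonneg: "0 \<le> Z" "0 \<le> M1" "0 \<le> F" "0 \<le> N0'" "0 \<le> N1'" "0 \<le> M0'" "0 \<le> M1'" "0 \<le> J"
    and energy: "\<kappa> / 2 * Z + b / 2 * M1 + c\<^sup>2 * M01
      \<le> b / 2 * M1' + c\<^sup>2 * M01' + (4 * \<sigma>\<^sup>2 * \<beta>up\<^sup>2 / \<kappa> + c\<^sup>2) * J + F / \<kappa>"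
    and mixed: "c\<^sup>2 * \<bar>M01\<bar> \<le> b / 4 * M1 + c ^ 4 / b * M0" "\<bar>M01'\<bar> \<le> (M0' + M1') / 2"
    and growth: "N0 \<le> N0' + I" "N1 \<le> N1' + I + Z" "M0 \<le> M0' + I" "J \<le> I"
  shows "N0 + N1 + Z + M0 + M1 \<le> LK_rate b c \<kappa> \<sigma> \<beta>up * (N0' + N1' + M0' + M1' + I + F)"
proof -
  define L where "L = N0' + N1' + M0' + M1' + I + F"
  define K where "K = b / 2 + c\<^sup>2 / 2 + c ^ 4 / b + 4 * \<sigma>\<^sup>2 * \<beta>up\<^sup>2 / \<kappa> + c\<^sup>2 + 1 / \<kappa>"
  have "0 \<le> I" using growth(4) nonneg(8) by linarith
  then have L: "M1' \<le> L" "M0' + M1' \<le> L" "M0 \<le> L" "J \<le> L" "F \<le> L"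
    using nonneg growth unfolding L_def by linarith+
  have "b / 2 * M1' \<le> b / 2 * L" "c\<^sup>2 / 2 * (M0' + M1') \<le> c\<^sup>2 / 2 * L"
    "c ^ 4 / b * M0 \<le> c ^ 4 / b * L" "(4 * \<sigma>\<^sup>2 * \<beta>up\<^sup>2 / \<kappa> + c\<^sup>2) * J \<le> (4 * \<sigma>\<^sup>2 * \<beta>up\<^sup>2 / \<kappa> + c\<^sup>2) * L"
    "F / \<kappa> \<le> L / \<kappa>"
    using L pos by (auto intro!: mult_left_mono divide_right_mono)
  moreover have "c\<^sup>2 * M01' \<le> c\<^sup>2 / 2 * (M0' + M1')"
  proof -
    have "c\<^sup>2 * M01' \<le> c\<^sup>2 * \<bar>M01'\<bar>" by (intro mult_left_mono) auto
    also have "\<dots> \<le> c\<^sup>2 * ((M0' + M1') / 2)" by (intro mult_left_mono mixed(2)) simp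
    finally show ?thesis by simp
  qed
  moreover have "- (c\<^sup>2 * M01) \<le> c\<^sup>2 * \<bar>M01\<bar>"
    using mult_left_mono[OF abs_ge_minus_self[of M01], of "c\<^sup>2"] by simp
  ultimately have "\<kappa> / 2 * Z + b / 4 * M1 \<le> K * L"
    using energy mixed(1) unfolding K_def by (simp add: algebra_simps add_divide_distrib)
  moreover have "0 \<le> \<kappa> / 2 * Z" "0 \<le> b / 4 * M1" using nonneg(1,2) pos by simp_all
  ultimately have "\<kappa> / 2 * Z \<le> K * L" "b / 4 * M1 \<le> K * L" by linarith+
  then have Z: "Z \<le> 2 * K / \<kappa> * L" and M1: "M1 \<le> 4 * K / b * L"
    using pos by (simp_all add: field_simps)
  have "N0 + N1 + Z + M0 + M1 \<le> 3 * L + 2 * Z + M1"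
    using growth nonneg \<open>0 \<le> I\<close> unfolding L_def by (simp add: algebra_simps)
  also have "\<dots> \<le> 3 * L + 2 * (2 * K / \<kappa> * L) + 4 * K / b * L"
    using Z M1 by linarith
  also have "\<dots> = (3 + 4 * K / \<kappa> + 4 * K / b) * L"
    by (simp add: algebra_simps)
  finally show ?thesis unfolding LK_rate_def Let_def K_def[symmetric] L_def .
qed

section \<open>The semi-discrete problem\<close>

locale LK_semidiscrete =
  fixes \<Omega> :: "(real^'d) set" and b c k \<sigma> T \<alpha>lo \<alpha>up \<beta>up :: real
    and B :: "(real^'d \<Rightarrow> real) list" and W :: "(real^'d \<Rightarrow> real^'d) list"
    and \<alpha> :: "real \<Rightarrow> real^'d \<Rightarrow> real" and \<beta> :: "real \<Rightarrow> real^'d \<Rightarrow> real^'d"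
    and f :: "real \<Rightarrow> real^'d \<Rightarrow> real"
    and \<psi> \<psi>t \<psi>tt :: "real \<Rightarrow> real^'d \<Rightarrow> real" and v vt vtt :: "real \<Rightarrow> real^'d \<Rightarrow> real^'d"
  assumes \<Omega>_open: "open \<Omega>"
    and b_pos: "b > 0" and c_pos: "c > 0" and T_pos: "T > 0" and \<kappa>_pos: "1 - 2 * \<bar>k\<bar> * \<alpha>lo > 0"
    and B_sq_int: "\<forall>q\<in>set B. sq_int \<Omega> q" and W_Hdiv: "\<forall>w\<in>set W. Hdiv \<Omega> w"
    and div_W: "\<forall>w\<in>fspan W. \<exists>g\<in>fspan B. has_weak_div \<Omega> w g"
    and \<alpha>_measurable: "(\<lambda>(t,x). \<alpha> t x) \<in> borel_measurable (lebesgue_on ({0<..<T} \<times> \<Omega>))"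
    and \<alpha>_bounds: "\<forall>t\<in>{0<..<T}. \<forall>x\<in>\<Omega>. 1 - 2 * \<bar>k\<bar> * \<alpha>lo \<le> 1 + 2 * k * \<alpha> t x
                              \<and> 1 + 2 * k * \<alpha> t x \<le> 1 + 2 * \<bar>k\<bar> * \<alpha>up"
    and \<beta>_bound: "AE z in lebesgue_on ({0<..<T} \<times> \<Omega>). norm ((\<lambda>(t,x). \<beta> t x) z) \<le> \<beta>up"
    and f_measurable: "(\<lambda>(t,x). f t x) \<in> borel_measurable (lebesgue_on ({0<..<T} \<times> \<Omega>))"
    and f_square_integrable: "integrable (lebesgue_on ({0<..<T} \<times> \<Omega>)) (\<lambda>(t,x). (f t x)^2)"
    and \<psi>_H2: "H2_time B T \<psi> \<psi>t \<psi>tt" and v_H2: "H2_time W T v vt vtt"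
    and LK: "AE t in lebesgue_on {0<..<T}.
           (\<forall>\<phi>\<in>fspan B.
              l2ip \<Omega> (\<lambda>x. (1 + 2 * k * \<alpha> t x) * \<psi>tt t x) \<phi>
              - l2ip \<Omega> (\<lambda>x. c^2 * wdiv \<Omega> (v t) x + b * wdiv \<Omega> (vt t) x) \<phi>
              + 2 * \<sigma> * l2ip \<Omega> (\<lambda>x. inner (\<beta> t x) (vt t x)) \<phi>
              = l2ip \<Omega> (f t) \<phi>)
           \<and> (\<forall>w\<in>fspan W. l2ip \<Omega> (v t) w + l2ip \<Omega> (\<psi> t) (wdiv \<Omega> w) = 0)"
begin

definition \<kappa> :: real where "\<kappa> = 1 - 2 * \<bar>k\<bar> * \<alpha>lo"

abbreviation ip :: "(real \<Rightarrow> real^'d \<Rightarrow> 'b::real_inner) \<Rightarrow> (real \<Rightarrow> real^'d \<Rightarrow> 'b) \<Rightarrow> real \<Rightarrow> real" where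
  "ip u w s \<equiv> l2ip \<Omega> (u s) (w s)"

lemma W_sq_int: "\<forall>q\<in>set W. sq_int \<Omega> q"
  using W_Hdiv by (simp add: Hdiv_def)

lemma curves:
  "span_primitive_on B T \<psi> \<psi>t" "span_primitive_on B T \<psi>t \<psi>tt"
  "span_primitive_on W T v vt" "span_primitive_on W T vt vtt"
  using H2_time_span_primitive_on[OF \<psi>_H2] H2_time_span_primitive_on[OF v_H2] T_pos by simp_all

lemma curves_in_spans:
  assumes "t \<in> {0..T}"
  shows "\<psi> t \<in> fspan B" "\<psi>t t \<in> fspan B" "\<psi>tt t \<in> fspan B"
    "v t \<in> fspan W" "vt t \<in> fspan W" "vtt t \<in> fspan W"
  using span_primitive_on_fspan[OF curves(1) assms] span_primitive_on_fspan[OF curves(2) assms]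
    span_primitive_on_fspan[OF curves(3) assms] span_primitive_on_fspan[OF curves(4) assms]
  by simp_all

lemma sq_int_curves:
  assumes "t \<in> {0..T}"
  shows "sq_int \<Omega> (\<psi> t)" "sq_int \<Omega> (\<psi>t t)" "sq_int \<Omega> (\<psi>tt t)"
    "sq_int \<Omega> (v t)" "sq_int \<Omega> (vt t)" "sq_int \<Omega> (vtt t)"
  using curves_in_spans[OF assms] sq_int_fspan[OF B_sq_int] sq_int_fspan[OF W_sq_int] by simp_all

lemma sq_int_wdiv:
  assumes "w \<in> fspan W"
  shows "sq_int \<Omega> (wdiv \<Omega> w)"
proof -
  obtain g where "has_weak_div \<Omega> w g" using div_W assms by blast
  then have "has_weak_div \<Omega> w (wdiv \<Omega> w)" unfolding wdiv_def by (rule someI[of "has_weak_div \<Omega> w"])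
  then show ?thesis by (simp add: has_weak_div_def)
qed

text \<open>The second equation holds for a.e. \<open>t\<close> with \<open>v\<^sub>h\<close> and \<open>\<psi>\<^sub>h\<close>; as both sides are
  primitives, it can be differentiated twice in time.\<close>

lemma second_equation_tt:
  "AE s in lebesgue_on {0..T}. \<forall>w\<in>fspan W. l2ip \<Omega> (vtt s) w + l2ip \<Omega> (\<psi>tt s) (wdiv \<Omega> w) = 0"
proof (rule AE_all_fspan_pairing_zero[OF W_sq_int B_sq_int])
  show "vtt s \<in> fspan W" "\<psi>tt s \<in> fspan B" if "s \<in> {0..T}" for s
    using curves_in_spans[OF that] by simp_all
  show "sq_int \<Omega> w \<and> sq_int \<Omega> (wdiv \<Omega> w)" if "w \<in> fspan W" for w
    using sq_int_fspan[OF W_sq_int that] sq_int_wdiv[OF that] by simp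
  fix w assume w: "w \<in> fspan W"
  have w_sq: "sq_int \<Omega> w" "sq_int \<Omega> (wdiv \<Omega> w)"
    using sq_int_fspan[OF W_sq_int w] sq_int_wdiv[OF w] by simp_all
  have T0: "0 \<le> T" using T_pos by simp
  note pairing_prim = primitive_on_add[OF primitive_on_l2ip_const[OF _ W_sq_int w_sq(1) T0]
      primitive_on_l2ip_const[OF _ B_sq_int w_sq(2) T0]]
  have "AE t in lebesgue_on {0..T}. l2ip \<Omega> (v t) w + l2ip \<Omega> (\<psi> t) (wdiv \<Omega> w) = 0"
    using AE_lebesgue_on_Icc_if_Ioo[OF LK] by (rule lebesgue_on_mono) (use w in blast)
  then have "AE t in lebesgue_on {0..T}. l2ip \<Omega> (vt t) w + l2ip \<Omega> (\<psi>t t) (wdiv \<Omega> w) = 0"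
    by (rule primitive_on_AE_zero[OF pairing_prim[OF curves(3) curves(1)] T_pos])
  then show "AE t in lebesgue_on {0..T}. l2ip \<Omega> (vtt t) w + l2ip \<Omega> (\<psi>tt t) (wdiv \<Omega> w) = 0"
    by (rule primitive_on_AE_zero[OF pairing_prim[OF curves(4) curves(2)] T_pos])
qed

lemma sets_lebesgue: "\<Omega> \<in> sets lebesgue" "{0<..<T} \<in> sets lebesgue" "{0<..<T} \<times> \<Omega> \<in> sets lebesgue"
  using borel_open[OF \<Omega>_open] borel_open[OF open_Times[OF open_greaterThanLessThan[of 0 T] \<Omega>_open]]
  by auto

lemma AE_slices: "AE t in lebesgue_on {0<..<T}. \<alpha> t \<in> borel_measurable (lebesgue_on \<Omega>)
    \<and> sq_int \<Omega> (f t) \<and> (AE x in lebesgue_on \<Omega>. norm (\<beta> t x) \<le> \<beta>up)"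
proof -
  have sets: "{0<..<T} \<times> \<Omega> \<in> sets lebesgue" "{0<..<T} \<in> sets lebesgue" "\<Omega> \<in> sets lebesgue"
    using sets_lebesgue by simp_all
  have "AE t in lebesgue_on {0<..<T}. (\<lambda>x. (\<lambda>(t, x). \<alpha> t x) (t, x)) \<in> borel_measurable (lebesgue_on \<Omega>)"
    by (rule AE_slice_measurable[OF \<alpha>_measurable sets])
  moreover have "AE t in lebesgue_on {0<..<T}. (\<lambda>x. (\<lambda>(t, x). f t x) (t, x)) \<in> borel_measurable (lebesgue_on \<Omega>)"
    by (rule AE_slice_measurable[OF f_measurable sets])
  moreover have "AE t in lebesgue_on {0<..<T}. integrable (lebesgue_on \<Omega>) (\<lambda>x. (\<lambda>(t, x). (f t x)\<^sup>2) (t, x))"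
    by (rule integrable_slice_integral(1)[OF f_square_integrable sets])
  moreover have "AE t in lebesgue_on {0<..<T}. AE x in lebesgue_on \<Omega>. norm ((\<lambda>(t, x). \<beta> t x) (t, x)) \<le> \<beta>up"
    by (rule AE_slice_AE[OF \<beta>_bound sets])
  ultimately show ?thesis by eventually_elim (simp add: sq_int_def)
qed

lemma integrable_norm_f:
  assumes "t \<in> {0..T}"
  shows "integrable (lebesgue_on {0..t}) (ip f f)"
proof -
  have "integrable (lebesgue_on {0<..<T})
      (\<lambda>t. integral\<^sup>L (lebesgue_on \<Omega>) (\<lambda>x. (\<lambda>(t, x). (f t x)\<^sup>2) (t, x)))"
    using sets_lebesgue by (intro integrable_slice_integral(2)[OF f_square_integrable]) simp_all
  then have "integrable (lebesgue_on {0<..<T}) (ip f f)"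
    by (simp add: l2ip_def power2_eq_square)
  then show ?thesis
    by (rule integrable_lebesgue_on_Icc_if_Ioo) (use assms in simp_all)
qed

lemma pointwise_energy_bound:
  "AE s in lebesgue_on {0..T}. \<kappa> * ip \<psi>tt \<psi>tt s + c\<^sup>2 * ip vtt v s + b * ip vtt vt s
    \<le> \<kappa> / 2 * ip \<psi>tt \<psi>tt s + 4 * \<sigma>\<^sup>2 * \<beta>up\<^sup>2 / \<kappa> * ip vt vt s + ip f f s / \<kappa>"
proof -
  have "AE s in lebesgue_on {0<..<T}. \<forall>w\<in>fspan W. l2ip \<Omega> (vtt s) w + l2ip \<Omega> (\<psi>tt s) (wdiv \<Omega> w) = 0"
    by (rule AE_lebesgue_on_subset[OF second_equation_tt]) auto
  with AE_slices LK have "AE s in lebesgue_on {0<..<T}. (\<alpha> s \<in> borel_measurable (lebesgue_on \<Omega>)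
      \<and> sq_int \<Omega> (f s) \<and> (AE x in lebesgue_on \<Omega>. norm (\<beta> s x) \<le> \<beta>up))
      \<and> (\<forall>\<phi>\<in>fspan B. l2ip \<Omega> (\<lambda>x. (1 + 2 * k * \<alpha> s x) * \<psi>tt s x) \<phi>
          - l2ip \<Omega> (\<lambda>x. c^2 * wdiv \<Omega> (v s) x + b * wdiv \<Omega> (vt s) x) \<phi>
          + 2 * \<sigma> * l2ip \<Omega> (\<lambda>x. inner (\<beta> s x) (vt s x)) \<phi> = l2ip \<Omega> (f s) \<phi>)
      \<and> (\<forall>w\<in>fspan W. l2ip \<Omega> (vtt s) w + l2ip \<Omega> (\<psi>tt s) (wdiv \<Omega> w) = 0)"
    by eventually_elim blast
  then have "AE s in lebesgue_on {0<..<T}. \<kappa> * ip \<psi>tt \<psi>tt s + c\<^sup>2 * ip vtt v s + b * ip vtt vt s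
    \<le> \<kappa> / 2 * ip \<psi>tt \<psi>tt s + 4 * \<sigma>\<^sup>2 * \<beta>up\<^sup>2 / \<kappa> * ip vt vt s + ip f f s / \<kappa>"
  proof (rule lebesgue_on_mono)
    fix s assume hyps: "(\<alpha> s \<in> borel_measurable (lebesgue_on \<Omega>)
      \<and> sq_int \<Omega> (f s) \<and> (AE x in lebesgue_on \<Omega>. norm (\<beta> s x) \<le> \<beta>up))
      \<and> (\<forall>\<phi>\<in>fspan B. l2ip \<Omega> (\<lambda>x. (1 + 2 * k * \<alpha> s x) * \<psi>tt s x) \<phi>
          - l2ip \<Omega> (\<lambda>x. c^2 * wdiv \<Omega> (v s) x + b * wdiv \<Omega> (vt s) x) \<phi>
          + 2 * \<sigma> * l2ip \<Omega> (\<lambda>x. inner (\<beta> s x) (vt s x)) \<phi> = l2ip \<Omega> (f s) \<phi>)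
      \<and> (\<forall>w\<in>fspan W. l2ip \<Omega> (vtt s) w + l2ip \<Omega> (\<psi>tt s) (wdiv \<Omega> w) = 0)"
      and s: "s \<in> {0<..<T}"
    then have s': "s \<in> {0..T}" by simp
    show "\<kappa> * ip \<psi>tt \<psi>tt s + c\<^sup>2 * ip vtt v s + b * ip vtt vt s
      \<le> \<kappa> / 2 * ip \<psi>tt \<psi>tt s + 4 * \<sigma>\<^sup>2 * \<beta>up\<^sup>2 / \<kappa> * ip vt vt s + ip f f s / \<kappa>"
    proof (rule LK_tested_with_acceleration[where R = "1 + 2 * \<bar>k\<bar> * \<alpha>up" and \<beta> = "\<beta> s"])
      show "\<kappa> > 0" using \<kappa>_pos by (simp add: \<kappa>_def)
      show "\<kappa> \<le> 1 + 2 * k * \<alpha> s x \<and> 1 + 2 * k * \<alpha> s x \<le> 1 + 2 * \<bar>k\<bar> * \<alpha>up" if "x \<in> \<Omega>" for x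
        using \<alpha>_bounds s that by (simp add: \<kappa>_def)
      have [measurable]: "\<alpha> s \<in> borel_measurable (lebesgue_on \<Omega>)" using hyps by blast
      show "(\<lambda>x. 1 + 2 * k * \<alpha> s x) \<in> borel_measurable (lebesgue_on \<Omega>)" by measurable
      show "sq_int \<Omega> (\<psi>tt s)" "sq_int \<Omega> (vt s)" using sq_int_curves[OF s'] by simp_all
      show "sq_int \<Omega> (wdiv \<Omega> (v s))" "sq_int \<Omega> (wdiv \<Omega> (vt s))"
        using sq_int_wdiv curves_in_spans[OF s'] by simp_all
      show "\<psi>tt s \<in> fspan B" "v s \<in> fspan W" "vt s \<in> fspan W" using curves_in_spans[OF s'] by simp_all
    qed (use hyps in simp_all)
  qed
  then show ?thesis by (rule AE_lebesgue_on_Icc_if_Ioo)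
qed

abbreviation E :: "real \<Rightarrow> real" where
  "E \<equiv> energy \<Omega> \<psi> \<psi>t \<psi>tt v vt"

abbreviation Z :: "real \<Rightarrow> real" where
  "Z t \<equiv> integral\<^sup>L (lebesgue_on {0..t}) (ip \<psi>tt \<psi>tt)"

lemma energy_eq: "E t = ip \<psi> \<psi> t + ip \<psi>t \<psi>t t + Z t + ip v v t + ip vt vt t"
  by (simp add: energy_def)

lemma primitives:
  "primitive_on T (ip \<psi> \<psi>) (\<lambda>s. 2 * ip \<psi> \<psi>t s)" "primitive_on T (ip \<psi>t \<psi>t) (\<lambda>s. 2 * ip \<psi>t \<psi>tt s)"
  "primitive_on T (ip v v) (\<lambda>s. 2 * ip v vt s)" "primitive_on T (ip vt vt) (\<lambda>s. 2 * ip vt vtt s)"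
  "primitive_on T (ip v vt) (\<lambda>s. ip vt vt s + ip v vtt s)" "primitive_on T Z (ip \<psi>tt \<psi>tt)"
  using T_pos primitive_on_l2ip_self[OF curves(1) B_sq_int] primitive_on_l2ip_self[OF curves(2) B_sq_int]
    primitive_on_l2ip_self[OF curves(3) W_sq_int] primitive_on_l2ip_self[OF curves(4) W_sq_int]
    primitive_on_l2ip[OF curves(3) curves(4) W_sq_int]
    primitive_on_integral[OF H2_time_integrable_l2ip_second[OF \<psi>_H2 B_sq_int]]
  by simp_all

lemma Z_nonneg: "0 \<le> Z t"
  by (rule integral_nonneg_AE) (simp add: l2ip_self_nonneg)

lemma energy_continuous: "continuous_on {0..T} E"
  unfolding energy_eq using primitives
  by (intro continuous_on_add primitive_on_continuous) simp_all

lemma energy_bounds_terms: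
  "ip \<psi> \<psi> s + ip \<psi>t \<psi>t s \<le> E s" "ip v v s + ip vt vt s \<le> E s" "ip vt vt s \<le> E s"
  using Z_nonneg[of s] l2ip_self_nonneg[of \<Omega> "\<psi> s"] l2ip_self_nonneg[of \<Omega> "\<psi>t s"]
    l2ip_self_nonneg[of \<Omega> "v s"] l2ip_self_nonneg[of \<Omega> "vt s"] by (simp_all add: energy_eq)

lemma energy_growth:
  assumes t: "t \<in> {0..T}"
  shows "ip \<psi> \<psi> t \<le> ip \<psi> \<psi> 0 + integral\<^sup>L (lebesgue_on {0..t}) E"
    "ip \<psi>t \<psi>t t \<le> ip \<psi>t \<psi>t 0 + integral\<^sup>L (lebesgue_on {0..t}) E + Z t"
    "ip v v t \<le> ip v v 0 + integral\<^sup>L (lebesgue_on {0..t}) E"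
proof -
  have sub: "{0..t} \<subseteq> {0..T}" using t by simp
  have iE: "integrable (lebesgue_on {0..t}) E"
    using continuous_on_subset[OF energy_continuous sub] by (rule continuous_imp_integrable_real)
  have iZ': "integrable (lebesgue_on {0..t}) (ip \<psi>tt \<psi>tt)"
    using primitive_on_integrable_Icc[OF primitives(6) t] .
  have young: "2 * ip \<psi> \<psi>t s \<le> E s" "2 * ip \<psi>t \<psi>tt s \<le> E s + ip \<psi>tt \<psi>tt s"
    "2 * ip v vt s \<le> E s" if "s \<in> {0..t}" for s
  proof -
    have s: "s \<in> {0..T}" using sub that by blast
    note terms = energy_bounds_terms[of s] l2ip_self_nonneg[of \<Omega> "\<psi> s"]
    show "2 * ip \<psi> \<psi>t s \<le> E s" using two_l2ip_le[OF sq_int_curves(1,2)[OF s]] terms by linarith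
    show "2 * ip \<psi>t \<psi>tt s \<le> E s + ip \<psi>tt \<psi>tt s"
      using two_l2ip_le[OF sq_int_curves(2,3)[OF s]] terms by linarith
    show "2 * ip v vt s \<le> E s" using two_l2ip_le[OF sq_int_curves(4,5)[OF s]] terms by linarith
  qed
  show "ip \<psi> \<psi> t \<le> ip \<psi> \<psi> 0 + integral\<^sup>L (lebesgue_on {0..t}) E"
    by (rule primitive_on_le_integral[OF primitives(1) t iE], rule AE_I2) (use young(1) in simp)
  show "ip v v t \<le> ip v v 0 + integral\<^sup>L (lebesgue_on {0..t}) E"
    by (rule primitive_on_le_integral[OF primitives(3) t iE], rule AE_I2) (use young(3) in simp)
  have "ip \<psi>t \<psi>t t \<le> ip \<psi>t \<psi>t 0 + integral\<^sup>L (lebesgue_on {0..t}) (\<lambda>s. E s + ip \<psi>tt \<psi>tt s)"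
    by (rule primitive_on_le_integral[OF primitives(2) t], use iE iZ' in simp, rule AE_I2)
      (use young(2) in simp)
  then show "ip \<psi>t \<psi>t t \<le> ip \<psi>t \<psi>t 0 + integral\<^sup>L (lebesgue_on {0..t}) E + Z t"
    using iE iZ' by simp
qed

lemma integrated_energy_bound:
  assumes t: "t \<in> {0..T}"
  shows "\<kappa> / 2 * Z t + b / 2 * ip vt vt t + c\<^sup>2 * ip v vt t
    \<le> b / 2 * ip vt vt 0 + c\<^sup>2 * ip v vt 0
      + (4 * \<sigma>\<^sup>2 * \<beta>up\<^sup>2 / \<kappa> + c\<^sup>2) * integral\<^sup>L (lebesgue_on {0..t}) (ip vt vt)
      + integral\<^sup>L (lebesgue_on {0..t}) (ip f f) / \<kappa>"
proof -
  have ivt: "integrable (lebesgue_on {0..t}) (ip vt vt)"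
    using continuous_on_subset[OF primitive_on_continuous[OF primitives(4)]] t
    by (intro continuous_imp_integrable_real) auto
  have "primitive_on T (\<lambda>s. \<kappa> / 2 * Z s + (b / 2 * ip vt vt s + c\<^sup>2 * ip v vt s))
      (\<lambda>s. \<kappa> / 2 * ip \<psi>tt \<psi>tt s + (b / 2 * (2 * ip vt vtt s) + c\<^sup>2 * (ip vt vt s + ip v vtt s)))"
    using primitives by (intro primitive_on_add primitive_on_cmult)
  moreover have "integrable (lebesgue_on {0..t})
      (\<lambda>s. (4 * \<sigma>\<^sup>2 * \<beta>up\<^sup>2 / \<kappa> + c\<^sup>2) * ip vt vt s + ip f f s / \<kappa>)"
    using ivt integrable_norm_f[OF t]
    by (intro Bochner_Integration.integrable_add integrable_mult_right integrable_divide)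
  moreover have "AE s in lebesgue_on {0..t}. \<kappa> / 2 * ip \<psi>tt \<psi>tt s
      + (b / 2 * (2 * ip vt vtt s) + c\<^sup>2 * (ip vt vt s + ip v vtt s))
      \<le> (4 * \<sigma>\<^sup>2 * \<beta>up\<^sup>2 / \<kappa> + c\<^sup>2) * ip vt vt s + ip f f s / \<kappa>"
  proof (rule lebesgue_on_mono)
    show "AE s in lebesgue_on {0..t}. \<kappa> * ip \<psi>tt \<psi>tt s + c\<^sup>2 * ip vtt v s + b * ip vtt vt s
      \<le> \<kappa> / 2 * ip \<psi>tt \<psi>tt s + 4 * \<sigma>\<^sup>2 * \<beta>up\<^sup>2 / \<kappa> * ip vt vt s + ip f f s / \<kappa>"
      using t by (intro AE_lebesgue_on_subset[OF pointwise_energy_bound]) auto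
  qed (simp add: l2ip_commute[of \<Omega> "vtt _"] algebra_simps)
  ultimately have "\<kappa> / 2 * Z t + (b / 2 * ip vt vt t + c\<^sup>2 * ip v vt t)
      \<le> \<kappa> / 2 * Z 0 + (b / 2 * ip vt vt 0 + c\<^sup>2 * ip v vt 0) + integral\<^sup>L (lebesgue_on {0..t})
        (\<lambda>s. (4 * \<sigma>\<^sup>2 * \<beta>up\<^sup>2 / \<kappa> + c\<^sup>2) * ip vt vt s + ip f f s / \<kappa>)"
    by (rule primitive_on_le_integral[OF _ t])
  moreover have "\<kappa> / 2 * Z 0 = 0" by (simp add: integral_eq_zero_null_sets)
  moreover have "integral\<^sup>L (lebesgue_on {0..t})
        (\<lambda>s. (4 * \<sigma>\<^sup>2 * \<beta>up\<^sup>2 / \<kappa> + c\<^sup>2) * ip vt vt s + ip f f s / \<kappa>)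
      = (4 * \<sigma>\<^sup>2 * \<beta>up\<^sup>2 / \<kappa> + c\<^sup>2) * integral\<^sup>L (lebesgue_on {0..t}) (ip vt vt)
        + integral\<^sup>L (lebesgue_on {0..t}) (ip f f) / \<kappa>"
    using ivt integrable_norm_f[OF t]
    by (subst Bochner_Integration.integral_add) (auto intro: integrable_divide)
  ultimately show ?thesis by linarith
qed

lemma energy_integral_inequality:
  assumes t: "t \<in> {0..T}"
  shows "E t \<le> LK_rate b c \<kappa> \<sigma> \<beta>up * (E 0 + integral\<^sup>L (lebesgue_on {0..t}) (ip f f))
    + LK_rate b c \<kappa> \<sigma> \<beta>up * integral\<^sup>L (lebesgue_on {0..t}) E"
proof -
  have t0: "0 \<in> {0..T}" using T_pos by simp
  have \<kappa>: "\<kappa> > 0" using \<kappa>_pos by (simp add: \<kappa>_def)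
  have F_nonneg: "0 \<le> integral\<^sup>L (lebesgue_on {0..t}) (ip f f)"
    and J_nonneg: "0 \<le> integral\<^sup>L (lebesgue_on {0..t}) (ip vt vt)"
    by (simp_all add: integral_nonneg_AE l2ip_self_nonneg)
  have "{0..t} \<subseteq> {0..T}" using t by simp
  note continuous_imp_integrable_real[OF continuous_on_subset[OF _ this]]
  then have J_le: "integral\<^sup>L (lebesgue_on {0..t}) (ip vt vt) \<le> integral\<^sup>L (lebesgue_on {0..t}) E"
    using energy_continuous primitive_on_continuous[OF primitives(4)] energy_bounds_terms(3)
    by (intro integral_mono) auto
  have mixed_t: "c\<^sup>2 * \<bar>ip v vt t\<bar> \<le> b / 4 * ip vt vt t + c ^ 4 / b * ip v v t"
  proof -
    have "\<bar>ip v vt t\<bar> \<le> (2 * c\<^sup>2 / b * ip v v t + ip vt vt t / (2 * c\<^sup>2 / b)) / 2"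
      using abs_l2ip_le_young[OF sq_int_curves(4,5)[OF t], of "2 * c\<^sup>2 / b"] b_pos c_pos by simp
    then have "c\<^sup>2 * \<bar>ip v vt t\<bar>
        \<le> c\<^sup>2 * ((2 * c\<^sup>2 / b * ip v v t + ip vt vt t / (2 * c\<^sup>2 / b)) / 2)"
      by (rule mult_left_mono) simp
    also have "\<dots> = b / 4 * ip vt vt t + c ^ 4 / b * ip v v t"
      using b_pos c_pos by (simp add: field_simps power2_eq_square power4_eq_xxxx)
    finally show ?thesis .
  qed
  have mixed_0: "\<bar>ip v vt 0\<bar> \<le> (ip v v 0 + ip vt vt 0) / 2"
    using abs_l2ip_le_young[OF sq_int_curves(4,5)[OF t0], of 1] by simp
  from LK_energy_algebra[OF b_pos \<kappa> Z_nonneg l2ip_self_nonneg F_nonneg l2ip_self_nonneg l2ip_self_nonneg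
      l2ip_self_nonneg l2ip_self_nonneg J_nonneg integrated_energy_bound[OF t] mixed_t mixed_0
      energy_growth[OF t] J_le]
  have "E t \<le> LK_rate b c \<kappa> \<sigma> \<beta>up * (ip \<psi> \<psi> 0 + ip \<psi>t \<psi>t 0 + ip v v 0 + ip vt vt 0
      + integral\<^sup>L (lebesgue_on {0..t}) E + integral\<^sup>L (lebesgue_on {0..t}) (ip f f))"
    unfolding energy_eq[of t] .
  moreover have "E 0 = ip \<psi> \<psi> 0 + ip \<psi>t \<psi>t 0 + ip v v 0 + ip vt vt 0"
    by (simp add: energy_eq integral_eq_zero_null_sets)
  ultimately show ?thesis by (simp add: algebra_simps)
qed

theorem energy_estimate:
  assumes t: "t \<in> {0..T}"
  shows "E t \<le> LK_rate b c \<kappa> \<sigma> \<beta>up * exp (LK_rate b c \<kappa> \<sigma> \<beta>up * T)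
    * (E 0 + integral\<^sup>L (lebesgue_on {0..t}) (ip f f))"
proof -
  define R where "R = LK_rate b c \<kappa> \<sigma> \<beta>up"
  define F where "F t = integral\<^sup>L (lebesgue_on {0..t}) (ip f f)" for t
  have R: "R > 0" unfolding R_def using b_pos \<kappa>_pos by (intro LK_rate_pos) (simp_all add: \<kappa>_def)
  have F_mono: "F s \<le> F t'" if "0 \<le> s" "s \<le> t'" "t' \<le> T" for s t'
    unfolding F_def using integrable_norm_f[of t'] that
    by (intro integral_mono_lebesgue_on_AE) (auto simp: l2ip_self_nonneg)
  have "E t \<le> R * (E 0 + F t) * exp (R * t)"
  proof (rule gronwall_integral[OF energy_continuous R _ _ t])
    show "R * (E 0 + F s) \<le> R * (E 0 + F t')" if "0 \<le> s" "s \<le> t'" "t' \<le> T" for s t'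
      using F_mono[OF that] R by simp
    show "E t' \<le> R * (E 0 + F t') + R * integral\<^sup>L (lebesgue_on {0..t'}) E" if "t' \<in> {0..T}" for t'
      using energy_integral_inequality[OF that] by (simp add: R_def F_def)
  qed
  also have "\<dots> \<le> R * (E 0 + F t) * exp (R * T)"
  proof (rule mult_left_mono)
    have "0 \<le> E 0" using energy_bounds_terms(1)[of 0] l2ip_self_nonneg[of \<Omega> "\<psi> 0"] l2ip_self_nonneg[of \<Omega> "\<psi>t 0"]
      by linarith
    moreover have "0 \<le> F t" unfolding F_def by (simp add: integral_nonneg_AE l2ip_self_nonneg)
    ultimately show "0 \<le> R * (E 0 + F t)" using R by simp
    show "exp (R * t) \<le> exp (R * T)" using t R by simp
  qed
  finally show ?thesis by (simp add: R_def F_def mult_ac)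
qed

end

theorem proposition3p1:
  fixes \<Omega> :: "(real^'d) set"
    and b c k \<sigma> T \<alpha>lo \<alpha>up \<beta>up :: real
  assumes dim: "CARD('d) = 2 \<or> CARD('d) = 3"
    and dom: "open \<Omega>" "bounded \<Omega>" "convex \<Omega>" "\<Omega> \<noteq> {}" "polytope (closure \<Omega>)"
    and pars: "b > 0" "c > 0" "T > 0"
    and K1const: "\<alpha>lo > 0" "\<alpha>up > 0" "\<beta>up > 0" "1 - 2 * \<bar>k\<bar> * \<alpha>lo > 0"
  shows "\<exists>C>0. \<forall>(B :: (real^'d \<Rightarrow> real) list) (W :: (real^'d \<Rightarrow> real^'d) list)
            (\<alpha> :: real \<Rightarrow> real^'d \<Rightarrow> real) (\<beta> :: real \<Rightarrow> real^'d \<Rightarrow> real^'d)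
            (f :: real \<Rightarrow> real^'d \<Rightarrow> real)
            (\<psi> :: real \<Rightarrow> real^'d \<Rightarrow> real) \<psi>t \<psi>tt
            (v :: real \<Rightarrow> real^'d \<Rightarrow> real^'d) vt vtt.
      \<comment> \<open>finite-dimensional conforming mixed spaces Psi_h = span B, V_h = span W, div V_h in Psi_h\<close>
      (\<forall>q\<in>set B. sq_int \<Omega> q) \<and> (\<forall>w\<in>set W. Hdiv \<Omega> w)
      \<and> (\<forall>w\<in>fspan W. \<exists>g\<in>fspan B. has_weak_div \<Omega> w g)
      \<comment> \<open>Assumption (K1), with measurable coefficients\<close>
      \<and> (\<lambda>(t,x). \<alpha> t x) \<in> borel_measurable (lebesgue_on ({0<..<T} \<times> \<Omega>))
      \<and> (\<lambda>(t,x). \<beta> t x) \<in> borel_measurable (lebesgue_on ({0<..<T} \<times> \<Omega>))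
      \<and> (\<forall>t\<in>{0<..<T}. \<forall>x\<in>\<Omega>. 1 - 2 * \<bar>k\<bar> * \<alpha>lo \<le> 1 + 2 * k * \<alpha> t x
                              \<and> 1 + 2 * k * \<alpha> t x \<le> 1 + 2 * \<bar>k\<bar> * \<alpha>up)
      \<and> (AE z in lebesgue_on ({0<..<T} \<times> \<Omega>). norm ((\<lambda>(t,x). \<beta> t x) z) \<le> \<beta>up)
      \<comment> \<open>f in L2(0,T;L2(Omega))\<close>
      \<and> (\<lambda>(t,x). f t x) \<in> borel_measurable (lebesgue_on ({0<..<T} \<times> \<Omega>))
      \<and> integrable (lebesgue_on ({0<..<T} \<times> \<Omega>)) (\<lambda>(t,x). (f t x)^2)
      \<comment> \<open>regularity of the solution\<close>
      \<and> H2_time B T \<psi> \<psi>t \<psi>tt \<and> H2_time W T v vt vtt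
      \<comment> \<open>the semi-discrete equations (LK) for a.e. t\<close>
      \<and> (AE t in lebesgue_on {0<..<T}.
           (\<forall>\<phi>\<in>fspan B.
              l2ip \<Omega> (\<lambda>x. (1 + 2 * k * \<alpha> t x) * \<psi>tt t x) \<phi>
              - l2ip \<Omega> (\<lambda>x. c^2 * wdiv \<Omega> (v t) x + b * wdiv \<Omega> (vt t) x) \<phi>
              + 2 * \<sigma> * l2ip \<Omega> (\<lambda>x. inner (\<beta> t x) (vt t x)) \<phi>
              = l2ip \<Omega> (f t) \<phi>)
           \<and> (\<forall>w\<in>fspan W. l2ip \<Omega> (v t) w + l2ip \<Omega> (\<psi> t) (wdiv \<Omega> w) = 0))
      \<comment> \<open>initial velocities v_0h, v_1h determined by psi_0h = psi(0), psi_1h = psi_t(0)\<close>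
      \<and> (\<forall>w\<in>fspan W. l2ip \<Omega> (v 0) w + l2ip \<Omega> (\<psi> 0) (wdiv \<Omega> w) = 0)
      \<and> (\<forall>w\<in>fspan W. l2ip \<Omega> (vt 0) w + l2ip \<Omega> (\<psi>t 0) (wdiv \<Omega> w) = 0)
      \<longrightarrow> (\<forall>t\<in>{0..T}. energy \<Omega> \<psi> \<psi>t \<psi>tt v vt t
              \<le> C * (energy \<Omega> \<psi> \<psi>t \<psi>tt v vt 0
                     + integral\<^sup>L (lebesgue_on {0..t}) (\<lambda>s. l2ip \<Omega> (f s) (f s))))"
proof -
  define R where "R = LK_rate b c (1 - 2 * \<bar>k\<bar> * \<alpha>lo) \<sigma> \<beta>up"
  have "R * exp (R * T) > 0" unfolding R_def using pars K1const by (simp add: LK_rate_pos)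
  moreover have "energy \<Omega> \<psi> \<psi>t \<psi>tt v vt t \<le> R * exp (R * T)
      * (energy \<Omega> \<psi> \<psi>t \<psi>tt v vt 0 + integral\<^sup>L (lebesgue_on {0..t}) (\<lambda>s. l2ip \<Omega> (f s) (f s)))"
    if "LK_semidiscrete \<Omega> b c k \<sigma> T \<alpha>lo \<alpha>up \<beta>up B W \<alpha> \<beta> f \<psi> \<psi>t \<psi>tt v vt vtt" "t \<in> {0..T}"
    for B W \<alpha> \<beta> f \<psi> \<psi>t \<psi>tt v vt vtt t
    using LK_semidiscrete.energy_estimate[OF that] unfolding LK_semidiscrete.\<kappa>_def[OF that(1)] R_def .
  ultimately show ?thesis
    using dom(1) pars K1const(4) unfolding LK_semidiscrete_def by blast
qed

end
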